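(* Let $0<a<1$ and let $(\mathbf X_j)_{j\ge0}$ be the persistent random walk on $\mathbb Z$ with persistence parameter $a$ started at $\mathbf X_0=0$, with law $P_a$. Let $\mathbf L:=\inf\{j\ge1:\mathbf X_j=0\}$, and let $\mathbf R$ and $\mathbf U$ be the numbers of runs and of long runs of the excursion path $\mathbf X_0,\dots,\mathbf X_{\mathbf L}$. Then for all integers $n\ge2$ and $k,\ell\ge0$, $$(1-a)P_a(\mathbf L=2n,\mathbf R=2k,\mathbf U=\ell)=a\,P_{1-a}(\mathbf L=2n,\mathbf L-\mathbf R=2k,\mathbf U=\ell).$$ Moreover, for $a=\frac12$ and all real $r,s,t$, $$E\{e^{ir\mathbf R}e^{is\mathbf U}e^{it\mathbf L}\}-E\{e^{ir(\mathbf L-\mathbf R)}e^{is\mathbf U}e^{it\mathbf L}\}=\tfrac12e^{2it}(e^{2ir}-1).$$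
   Context: The persistent random walk with parameter $a$: increments $\varepsilon_j=\mathbf X_j-\mathbf X_{j-1}\in\{\pm1\}$, $P(\varepsilon_1=1)=P(\varepsilon_1=-1)=\frac12$, and for $j\ge1$ the next increment equals the previous one with probability $a$ and is reversed with probability $1-a$. For a nearest-neighbour path, a run is a maximal block of consecutive steps that are all $+1$ or all $-1$; its length is its number of steps; a long run is a run of length at least $2$. *)

theory Defs
  imports "HOL-Probability.Probability"
begin

text \<open>Sample space: a fair coin deciding the first increment, and an i.i.d. stream of
  coins with P(True) = a; True means "the next increment equals the previous one".\<close>

definition PRW :: "real \<Rightarrow> (bool \<times> bool stream) measure" where
  "PRW a = measure_pmf (bernoulli_pmf (1/2)) \<Otimes>\<^sub>M stream_space (measure_pmf (bernoulli_pmf a))"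

text \<open>Increments eps_j = X_j - X_(j-1), for j \<ge> 1 (index 0 unused).\<close>
fun eps :: "bool \<times> bool stream \<Rightarrow> nat \<Rightarrow> int" where
  "eps \<omega> 0 = 0"
| "eps \<omega> (Suc 0) = (if fst \<omega> then 1 else -1)"
| "eps \<omega> (Suc (Suc j)) = eps \<omega> (Suc j) * (if snd \<omega> !! j then 1 else -1)"

definition X :: "bool \<times> bool stream \<Rightarrow> nat \<Rightarrow> int" where
  "X \<omega> n = (\<Sum>j\<in>{1..n}. eps \<omega> j)"

text \<open>First return time (with Inf {} = 0 on the null event of no return).\<close>
definition L :: "bool \<times> bool stream \<Rightarrow> nat" where
  "L \<omega> = Inf {j. j \<ge> 1 \<and> X \<omega> j = 0}"

fun runlens :: "int list \<Rightarrow> nat list" where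
  "runlens [] = []"
| "runlens [x] = [1]"
| "runlens (x # y # xs) =
     (case runlens (y # xs) of
        [] \<Rightarrow> [1]
      | r # rs \<Rightarrow> (if x = y then Suc r # rs else 1 # r # rs))"

definition num_runs :: "int list \<Rightarrow> nat" where
  "num_runs xs = length (runlens xs)"

definition num_long_runs :: "int list \<Rightarrow> nat" where
  "num_long_runs xs = length (filter (\<lambda>r. r \<ge> 2) (runlens xs))"

definition steps :: "bool \<times> bool stream \<Rightarrow> int list" where
  "steps \<omega> = map (eps \<omega>) [1..<Suc (L \<omega>)]"

definition R :: "bool \<times> bool stream \<Rightarrow> nat" where
  "R \<omega> = num_runs (steps \<omega>)"

definition U :: "bool \<times> bool stream \<Rightarrow> nat" where
  "U \<omega> = num_long_runs (steps \<omega>)"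

end

theory Submission
  imports Defs
begin

text \<open>The run lengths of an excursion of length \<open>2n \<ge> 4\<close> are coded by two bit strings \<open>a\<close>, \<open>b\<close>
  of length \<open>n - 2\<close> marking the ends of the up-runs and of the down-runs. The excursion
  condition becomes a ballot (domination) condition between \<open>a\<close> and \<open>b\<close>, and \<open>R\<close> is twice one
  more than the number of \<open>True\<close>s in \<open>a\<close>. The involution \<open>(a, b) \<mapsto> (\<not> b, \<not> a)\<close> preserves
  the number of long runs and sends \<open>R\<close> to \<open>L - R\<close>. Under \<open>P\<^sub>a\<close> a path of length \<open>L\<close> with
  \<open>R\<close> runs has probability \<open>a\<^bsup>L-R\<^esup> (1-a)\<^bsup>R-1\<^esup> / 2\<close>, which gives the first identity. For
  \<open>a = 1/2\<close> all excursions of a given length are equally likely, so the involution cancels every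
  contribution with \<open>L \<ge> 4\<close> and only the two excursions of length \<open>2\<close> remain. Both arguments
  need \<open>L < \<infinity>\<close> almost surely: if the walk avoided \<open>0\<close> with probability \<open>p > 0\<close>, every weight of
  positive paths would be at least \<open>p\<close>, while splitting words at their last minimum bounds the
  convolution of these weights by \<open>2 / (1 - a)\<close>.\<close>

section \<open>Runs of a word\<close>

lemma runlens_not_Nil: "xs \<noteq> [] \<Longrightarrow> runlens xs \<noteq> []"
  by (induction xs rule: runlens.induct) (auto split: list.split)

lemma runlens_Cons_Cons:
  "runlens (x # y # zs) =
     (if x = y then Suc (hd (runlens (y # zs))) # tl (runlens (y # zs)) else 1 # runlens (y # zs))"
  using runlens_not_Nil[of "y # zs"] by (auto split: list.split)

lemma runlens_replicate_append:
  "ys = [] \<or> hd ys \<noteq> s \<Longrightarrow> runlens (replicate (Suc r) s @ ys) = Suc r # runlens ys"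
proof (induction r)
  case 0
  then show ?case by (cases ys) (auto split: list.split)
next
  case (Suc r)
  have "runlens (replicate (Suc (Suc r)) s @ ys) = runlens (s # s # (replicate r s @ ys))" by simp
  also have "\<dots> = Suc (Suc r) # runlens ys" unfolding runlens_Cons_Cons using Suc by simp
  finally show ?case .
qed

lemma runlens_pos: "\<forall>r\<in>set (runlens xs). 0 < r"
  by (induction xs rule: runlens.induct) (auto split: list.split)

lemma sum_list_runlens: "sum_list (runlens xs) = length xs"
  by (induction xs rule: runlens.induct) (auto split: list.split)

lemma num_runs_pos: "xs \<noteq> [] \<Longrightarrow> 0 < num_runs xs"
  using runlens_not_Nil[of xs] unfolding num_runs_def by simp

lemma length_le_sum_list: "\<forall>r\<in>set rl. 0 < r \<Longrightarrow> length rl \<le> sum_list (rl :: nat list)"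
  by (induction rl) auto

lemma num_runs_le_length: "num_runs xs \<le> length xs"
  unfolding num_runs_def using length_le_sum_list[OF runlens_pos[of xs]] sum_list_runlens[of xs] by simp

lemma num_runs_Cons_Cons: "num_runs (x # y # zs) = num_runs (y # zs) + (if x = y then 0 else 1)"
  unfolding num_runs_def using runlens_not_Nil[of "y # zs"]
  by (cases "runlens (y # zs)") (auto simp: runlens_Cons_Cons)

fun word_of_runs :: "int \<Rightarrow> nat list \<Rightarrow> int list" where
  "word_of_runs s [] = []"
| "word_of_runs s (r # rs) = replicate r s @ word_of_runs (- s) rs"

lemma length_word_of_runs: "length (word_of_runs s rl) = sum_list rl"
  by (induction rl arbitrary: s) auto

lemma set_word_of_runs: "set (word_of_runs s rl) \<subseteq> {s, - s}"
  by (induction rl arbitrary: s) fastforce+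

lemma word_of_runs_uminus: "word_of_runs (- s) rl = map uminus (word_of_runs s rl)"
  by (induction rl arbitrary: s) auto

lemma hd_word_of_runs: "rl \<noteq> [] \<Longrightarrow> 0 < hd rl \<Longrightarrow> hd (word_of_runs s rl) = s"
  by (cases rl) (auto simp: hd_append)

lemma runlens_word_of_runs:
  "s \<noteq> 0 \<Longrightarrow> \<forall>r\<in>set rl. 0 < r \<Longrightarrow> runlens (word_of_runs s rl) = rl"
proof (induction rl arbitrary: s)
  case (Cons r rs)
  then obtain r' where r: "r = Suc r'" by (cases r) auto
  have "word_of_runs (- s) rs = [] \<or> hd (word_of_runs (- s) rs) \<noteq> s"
    using Cons hd_word_of_runs[of rs "- s"] by (cases rs) auto
  then show ?case using Cons r runlens_replicate_append[of "word_of_runs (- s) rs" s r']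
    by (simp del: replicate_Suc)
qed simp

lemma word_of_runs_runlens:
  "xs \<noteq> [] \<Longrightarrow> set xs \<subseteq> {1, -1} \<Longrightarrow> word_of_runs (hd xs) (runlens xs) = xs"
proof (induction xs rule: runlens.induct)
  case (3 x y zs)
  obtain r rs where rr: "runlens (y # zs) = r # rs"
    using runlens_not_Nil[of "y # zs"] by (cases "runlens (y # zs)") auto
  have IH: "replicate r y @ word_of_runs (- y) rs = y # zs" using 3 rr by simp
  show ?case
  proof (cases "x = y")
    case False
    then have "y = - x" using "3.prems"(2) by auto
    then show ?thesis using rr IH False by simp
  qed (use rr IH in simp)
qed auto

section \<open>Excursions\<close>

definition excursion :: "int list \<Rightarrow> bool" where
  "excursion xs \<longleftrightarrow>
     xs \<noteq> [] \<and> sum_list xs = 0 \<and> (\<forall>j. 0 < j \<and> j < length xs \<longrightarrow> sum_list (take j xs) \<noteq> 0)"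

lemma sum_list_map_uminus: "sum_list (map uminus xs) = - sum_list (xs :: int list)"
  by (induction xs) auto

lemma excursion_uminus: "excursion (map uminus xs) = excursion xs"
  unfolding excursion_def by (simp add: take_map sum_list_map_uminus)

lemma excursion_word_of_runs:
  "s \<in> {1, -1} \<Longrightarrow> excursion (word_of_runs s rl) = excursion (word_of_runs 1 rl)"
  using word_of_runs_uminus[of 1 rl] excursion_uminus[of "word_of_runs 1 rl"] by auto

lemma even_sum_list_pm1: "set xs \<subseteq> {1, -1 :: int} \<Longrightarrow> even (sum_list xs) = even (length xs)"
  by (induction xs) auto

lemma even_length_excursion: "set xs \<subseteq> {1, -1} \<Longrightarrow> excursion xs \<Longrightarrow> even (length xs)"
  using even_sum_list_pm1[of xs] unfolding excursion_def by auto

text \<open>A discrete intermediate value theorem: partial sums of a \<open>\<plusminus>1\<close> word move by one.\<close>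

lemma partial_sums_pos_if_nonzero:
  assumes "set xs \<subseteq> {1, -1}" "hd xs = 1" "m \<le> length xs"
    and nz: "\<And>j. 0 < j \<Longrightarrow> j \<le> m \<Longrightarrow> sum_list (take j xs) \<noteq> 0"
  shows "0 < j \<Longrightarrow> j \<le> m \<Longrightarrow> 0 < sum_list (take j (xs :: int list))"
proof (induction j)
  case (Suc j)
  show ?case
  proof (cases j)
    case 0
    then show ?thesis using assms(2,3) Suc.prems by (cases xs) auto
  next
    case (Suc i)
    have "j < length xs" using Suc.prems assms(3) by simp
    then have "take (Suc j) xs = take j xs @ [xs ! j]" and "xs ! j \<in> {1, -1}"
      using assms(1) nth_mem by (auto simp: take_Suc_conv_app_nth)
    moreover have "sum_list (take (Suc j) xs) \<noteq> 0" using nz Suc.prems by blast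
    ultimately show ?thesis using "Suc.IH" Suc.prems \<open>j = Suc i\<close> by auto
  qed
qed simp

fun pos_excursion_from :: "int \<Rightarrow> int list \<Rightarrow> bool" where
  "pos_excursion_from h [] = False"
| "pos_excursion_from h [x] = (h + x = 0)"
| "pos_excursion_from h (x # y # zs) = (h + x > 0 \<and> pos_excursion_from (h + x) (y # zs))"

lemma pos_excursion_from_imp:
  "pos_excursion_from h xs \<Longrightarrow>
     xs \<noteq> [] \<and> h + sum_list xs = 0 \<and> (\<forall>j. 0 < j \<and> j < length xs \<longrightarrow> h + sum_list (take j xs) > 0)"
proof (induction h xs rule: pos_excursion_from.induct)
  case (3 h x y zs)
  then have IH: "h + x + sum_list (y # zs) = 0"
      "\<forall>j. 0 < j \<and> j < length (y # zs) \<longrightarrow> h + x + sum_list (take j (y # zs)) > 0"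
    and hx: "h + x > 0" by auto
  have "h + sum_list (take j (x # y # zs)) > 0" if j: "0 < j" "j < length (x # y # zs)" for j
  proof (cases "j = 1")
    case False
    then obtain j' where "j = Suc j'" "0 < j'" using j by (cases j) auto
    then show ?thesis using IH(2) j by (simp add: add.assoc)
  qed (use hx in simp)
  then show ?case using IH(1) by (simp add: add.assoc)
qed auto

lemma pos_excursion_fromI:
  "xs \<noteq> [] \<Longrightarrow> h + sum_list xs = 0 \<Longrightarrow>
     \<forall>j. 0 < j \<and> j < length xs \<longrightarrow> h + sum_list (take j xs) > 0 \<Longrightarrow> pos_excursion_from h xs"
proof (induction h xs rule: pos_excursion_from.induct)
  case (3 h x y zs)
  have "h + x > 0" using "3.prems"(3)[rule_format, of 1] by simp
  moreover have "pos_excursion_from (h + x) (y # zs)"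
  proof (rule "3.IH")
    show "\<forall>j. 0 < j \<and> j < length (y # zs) \<longrightarrow> h + x + sum_list (take j (y # zs)) > 0"
      using "3.prems"(3) by (auto simp: add.assoc dest: spec[of _ "Suc _"])
  qed (use "3.prems"(2) in \<open>simp_all add: add.assoc\<close>)
  ultimately show ?case by simp
qed auto

lemma pos_excursion_from_iff:
  "pos_excursion_from h xs \<longleftrightarrow>
     xs \<noteq> [] \<and> h + sum_list xs = 0 \<and> (\<forall>j. 0 < j \<and> j < length xs \<longrightarrow> h + sum_list (take j xs) > 0)"
  using pos_excursion_from_imp pos_excursion_fromI by blast

lemma excursion_iff_pos_excursion_from:
  assumes "set xs \<subseteq> {1, -1}" "hd xs = 1"
  shows "excursion xs \<longleftrightarrow> pos_excursion_from 0 xs"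
proof
  assume e: "excursion xs"
  then have "0 < sum_list (take j xs)" if "0 < j" "j < length xs" for j
    using partial_sums_pos_if_nonzero[OF assms, of "length xs - 1" j] that
    unfolding excursion_def by force
  then show "pos_excursion_from 0 xs" using e unfolding pos_excursion_from_iff excursion_def by auto
qed (auto simp: pos_excursion_from_iff excursion_def)

lemma pos_excursion_from_replicate_up:
  "h \<ge> 0 \<Longrightarrow> ys \<noteq> [] \<Longrightarrow> pos_excursion_from h (replicate u 1 @ ys) = pos_excursion_from (h + int u) ys"
proof (induction u arbitrary: h)
  case (Suc u)
  have "pos_excursion_from h (replicate (Suc u) 1 @ ys)
      = pos_excursion_from (h + 1) (replicate u 1 @ ys)"
    using Suc.prems by (cases "replicate u 1 @ ys") auto
  then show ?case using Suc by (simp add: add.assoc)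
qed simp

lemma pos_excursion_from_replicate_down:
  "ys \<noteq> [] \<Longrightarrow> pos_excursion_from h (replicate (Suc d) (-1) @ ys)
     = (h - int (Suc d) > 0 \<and> pos_excursion_from (h - int (Suc d)) ys)"
proof (induction d arbitrary: h)
  case 0
  then show ?case by (cases ys) auto
next
  case (Suc d)
  have "pos_excursion_from h (replicate (Suc (Suc d)) (-1) @ ys)
      = (h - 1 > 0 \<and> pos_excursion_from (h - 1) (replicate (Suc d) (-1) @ ys))" by simp
  also have "\<dots> = (h - 1 > 0 \<and> h - 1 - int (Suc d) > 0 \<and> pos_excursion_from (h - 1 - int (Suc d)) ys)"
    using Suc.IH[of "h - 1"] Suc.prems by simp
  also have "h - 1 - int (Suc d) = h - int (Suc (Suc d))" by simp
  finally show ?case by auto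
qed

lemma pos_excursion_from_replicate_down_end:
  "pos_excursion_from h (replicate (Suc d) (-1)) = (h = int (Suc d))"
proof (induction d arbitrary: h)
  case (Suc d)
  have "pos_excursion_from h (replicate (Suc (Suc d)) (-1))
      = (h - 1 > 0 \<and> pos_excursion_from (h - 1) (replicate (Suc d) (-1)))" by simp
  then show ?case using Suc by auto
qed simp

lemma not_pos_excursion_from_replicate_up: "h \<ge> 0 \<Longrightarrow> \<not> pos_excursion_from h (replicate (Suc u) 1)"
proof (induction u arbitrary: h)
  case (Suc u)
  have "pos_excursion_from h (replicate (Suc (Suc u)) 1)
      = (h + 1 > 0 \<and> pos_excursion_from (h + 1) (replicate (Suc u) 1))" by simp
  then show ?case using Suc.IH[of "h + 1"] Suc.prems by auto
qed simp

text \<open>\<open>pos_excursion_from\<close> read on the run lengths \<open>u\<^sub>1, d\<^sub>1, u\<^sub>2, d\<^sub>2, \<dots>\<close> of a word starting upwards.\<close>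

fun runs_excursion_from :: "int \<Rightarrow> nat list \<Rightarrow> bool" where
  "runs_excursion_from h [] = False"
| "runs_excursion_from h [u] = False"
| "runs_excursion_from h [u, d] = (h + int u = int d)"
| "runs_excursion_from h (u # d # v # rest) =
     (h + int u - int d > 0 \<and> runs_excursion_from (h + int u - int d) (v # rest))"

lemma pos_excursion_from_word_of_runs:
  "h \<ge> 0 \<Longrightarrow> \<forall>r\<in>set rl. 0 < r \<Longrightarrow>
     pos_excursion_from h (word_of_runs 1 rl) = runs_excursion_from h rl"
proof (induction h rl rule: runs_excursion_from.induct)
  case (2 h u)
  then obtain u' where "u = Suc u'" by (cases u) auto
  then show ?case using not_pos_excursion_from_replicate_up[OF "2.prems"(1)] by simp
next
  case (3 h u d)
  then obtain d' where "d = Suc d'" by (cases d) auto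
  then show ?case
    using 3 pos_excursion_from_replicate_up[of h "replicate d (-1)" u]
      pos_excursion_from_replicate_down_end[of "h + int u" d']
    by (simp del: replicate_Suc)
next
  case (4 h u d v rest)
  then obtain d' where d: "d = Suc d'" by (cases d) auto
  have ne: "word_of_runs 1 (v # rest) \<noteq> []" using "4.prems" by (cases v) auto
  have "pos_excursion_from h (word_of_runs 1 (u # d # v # rest))
      = pos_excursion_from (h + int u) (replicate d (-1) @ word_of_runs 1 (v # rest))"
    using "4.prems" ne by (simp add: pos_excursion_from_replicate_up)
  also have "\<dots> = runs_excursion_from h (u # d # v # rest)"
    using pos_excursion_from_replicate_down[OF ne] d 4 by auto
  finally show ?case .
qed simp

lemma even_length_runs_excursion_from: "runs_excursion_from h rl \<Longrightarrow> even (length rl)"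
  by (induction h rl rule: runs_excursion_from.induct) auto

section \<open>The ballot condition on run lengths\<close>

fun odds :: "'a list \<Rightarrow> 'a list" where
  "odds [] = []"
| "odds [x] = [x]"
| "odds (x # y # zs) = x # odds zs"

fun evens :: "'a list \<Rightarrow> 'a list" where
  "evens [] = []"
| "evens [x] = []"
| "evens (x # y # zs) = y # evens zs"

fun interleave :: "'a list \<Rightarrow> 'a list \<Rightarrow> 'a list" where
  "interleave (x # xs) (y # ys) = x # y # interleave xs ys"
| "interleave _ _ = []"

lemma odds_interleave: "length u = length d \<Longrightarrow> odds (interleave u d) = u"
  by (induction u d rule: interleave.induct) auto

lemma evens_interleave: "length u = length d \<Longrightarrow> evens (interleave u d) = d"
  by (induction u d rule: interleave.induct) auto

lemma set_interleave: "set (interleave u d) \<subseteq> set u \<union> set d"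
  by (induction u d rule: interleave.induct) auto

lemma interleave_odds_evens: "even (length rl) \<Longrightarrow> interleave (odds rl) (evens rl) = rl"
  by (induction rl rule: odds.induct) auto

lemma length_odds_evens: "even (length rl) \<Longrightarrow> length (odds rl) = length (evens rl)"
  by (induction rl rule: odds.induct) auto

lemma length_odds_add_evens: "length (odds rl) + length (evens rl) = length rl"
  by (induction rl rule: odds.induct) auto

lemma sum_list_odds_add_evens: "sum_list (odds rl) + sum_list (evens rl) = sum_list (rl :: nat list)"
  by (induction rl rule: odds.induct) auto

lemma length_filter_odds_add_evens:
  "length (filter P (odds rl)) + length (filter P (evens rl)) = length (filter P rl)"
  by (induction rl rule: odds.induct) auto

lemma set_odds: "set (odds rl) \<subseteq> set rl"
  by (induction rl rule: odds.induct) auto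

lemma set_evens: "set (evens rl) \<subseteq> set rl"
  by (induction rl rule: odds.induct) auto

text \<open>\<open>ballot h u d\<close>: up-runs \<open>u\<close> and down-runs \<open>d\<close> taken alternately from height \<open>h\<close>
  give a positive excursion; only the heights after the down-runs need checking.\<close>

definition ballot :: "int \<Rightarrow> nat list \<Rightarrow> nat list \<Rightarrow> bool" where
  "ballot h u d \<longleftrightarrow> u \<noteq> [] \<and> length u = length d \<and> h + int (sum_list u) = int (sum_list d) \<and>
     (\<forall>j. 0 < j \<and> j < length u \<longrightarrow> int (sum_list (take j d)) < h + int (sum_list (take j u)))"

lemma ballot_Cons:
  assumes "us \<noteq> []"
  shows "ballot h (u # us) (d # ds) \<longleftrightarrow> h + int u - int d > 0 \<and> ballot (h + int u - int d) us ds"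
proof -
  have split: "(\<forall>j. 0 < j \<and> j < Suc (length us) \<longrightarrow> Q j) \<longleftrightarrow>
      Q 1 \<and> (\<forall>j. 0 < j \<and> j < length us \<longrightarrow> Q (Suc j))" for Q
  proof (intro iffI conjI allI impI)
    fix j assume "\<forall>j. 0 < j \<and> j < Suc (length us) \<longrightarrow> Q j"
    then show "Q 1" and "0 < j \<and> j < length us \<Longrightarrow> Q (Suc j)" using assms by auto
  next
    fix j assume H: "Q 1 \<and> (\<forall>j. 0 < j \<and> j < length us \<longrightarrow> Q (Suc j))"
      and j: "0 < j \<and> j < Suc (length us)"
    then obtain i where i: "j = Suc i" by (cases j) auto
    show "Q j" using H j unfolding i by (cases i) auto
  qed
  show ?thesis
    unfolding ballot_def using assms by (simp add: split) (auto simp: algebra_simps)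
qed

lemma runs_excursion_from_interleave:
  "length u = length d \<Longrightarrow> runs_excursion_from h (interleave u d) \<longleftrightarrow> ballot h u d"
proof (induction u d arbitrary: h rule: interleave.induct)
  case (1 u us d ds)
  show ?case
  proof (cases us)
    case Nil
    then show ?thesis using "1.prems" by (simp add: ballot_def)
  next
    case (Cons u' us')
    then obtain d' ds' where "ds = d' # ds'" using "1.prems" by (cases ds) auto
    then show ?thesis using 1 Cons by (simp add: ballot_Cons)
  qed
qed (auto simp: ballot_def)

lemma ballot_odds_evens: "runs_excursion_from h rl \<Longrightarrow> ballot h (odds rl) (evens rl)"
  using runs_excursion_from_interleave[of "odds rl" "evens rl" h]
  by (simp add: even_length_runs_excursion_from length_odds_evens interleave_odds_evens)

section \<open>Marking the ends of runs\<close>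

definition trues :: "bool list \<Rightarrow> nat" where "trues w = length (filter id w)"

lemma trues_simps[simp]: "trues [] = 0" "trues (True # w) = Suc (trues w)" "trues (False # w) = trues w"
  "trues (xs @ ys) = trues xs + trues ys" "trues (replicate k False) = 0"
  by (auto simp: trues_def)

lemma trues_map_Not: "trues (map Not w) = length w - trues w"
  unfolding trues_def by (induction w) (auto simp: Suc_diff_le)

lemma trues_le_length: "trues w \<le> length w" unfolding trues_def by simp

lemma trues_take_le: "trues (take x w) \<le> trues w"
  unfolding trues_def by (induction w arbitrary: x) (auto simp: take_Cons split: nat.split)

text \<open>\<open>marks rs\<close> writes each run length \<open>r\<close> as \<open>False\<^sup>r\<^sup>-\<^sup>1 True\<close>, so the number of \<open>True\<close>s among
  the first \<open>x\<close> letters is the number of runs completed within the first \<open>x\<close> steps; this turns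
  prefix sums of run lengths into counting.\<close>

fun marks :: "nat list \<Rightarrow> bool list" where
  "marks [] = []"
| "marks (r # rs) = replicate (r - 1) False @ True # marks rs"

fun runs_of_marks :: "nat \<Rightarrow> bool list \<Rightarrow> nat list" where
  "runs_of_marks c [] = []"
| "runs_of_marks c (b # w) = (if b then Suc c # runs_of_marks 0 w else runs_of_marks (Suc c) w)"

fun rises :: "bool list \<Rightarrow> nat" where
  "rises (x # y # w) = (if \<not> x \<and> y then 1 else 0) + rises (y # w)"
| "rises _ = 0"

fun falls :: "bool list \<Rightarrow> nat" where
  "falls (x # y # w) = (if x \<and> \<not> y then 1 else 0) + falls (y # w)"
| "falls _ = 0"

lemma runs_of_marks_replicate_False: "runs_of_marks c (replicate k False @ w) = runs_of_marks (c + k) w"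
  by (induction k arbitrary: c) auto

lemma runs_of_marks_marks: "\<forall>r\<in>set rs. 0 < r \<Longrightarrow> runs_of_marks 0 (marks rs) = rs"
  by (induction rs) (auto simp: runs_of_marks_replicate_False)

lemma marks_runs_of_marks: "w \<noteq> [] \<Longrightarrow> last w \<Longrightarrow> marks (runs_of_marks c w) = replicate c False @ w"
proof (induction w arbitrary: c)
  case (Cons b w)
  show ?case
  proof (cases b)
    case True
    then show ?thesis using Cons by (cases "w = []") auto
  next
    case False
    then have "w \<noteq> []" using Cons by auto
    then show ?thesis using Cons False by (simp add: replicate_app_Cons_same)
  qed
qed simp

lemma runs_of_marks_pos: "\<forall>r\<in>set (runs_of_marks c w). 0 < r"
  by (induction c w rule: runs_of_marks.induct) auto

lemma length_runs_of_marks: "length (runs_of_marks c w) = trues w"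
  by (induction c w rule: runs_of_marks.induct) auto

lemma length_marks: "\<forall>r\<in>set rs. 0 < r \<Longrightarrow> length (marks rs) = sum_list rs"
  by (induction rs) auto

lemma trues_marks: "trues (marks rs) = length rs"
  by (induction rs) auto

lemma sum_list_runs_of_marks: "w \<noteq> [] \<Longrightarrow> last w \<Longrightarrow> sum_list (runs_of_marks 0 w) = length w"
  using marks_runs_of_marks[of w 0] length_marks[of "runs_of_marks 0 w"] runs_of_marks_pos[of 0 w] by simp

lemma falls_False_Cons: "falls (False # w) = falls w"
  by (cases w) auto

lemma rises_True_Cons: "rises (True # w) = rises w"
  by (cases w) auto

lemma rises_replicate_False_True: "rises (replicate (Suc k) False @ True # w) = Suc (rises w)"
proof (induction k)
  case 0
  then show ?case using rises_True_Cons[of w] by simp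
next
  case (Suc k)
  then show ?case by simp
qed

lemma rises_marks: "\<forall>r\<in>set rs. 0 < r \<Longrightarrow> rises (marks rs) = length (filter (\<lambda>r. 2 \<le> r) rs)"
proof (induction rs)
  case (Cons r rs)
  show ?case
  proof (cases "r = 1")
    case True
    then show ?thesis using Cons rises_True_Cons by simp
  next
    case False
    then obtain k where k: "r - 1 = Suc k" using Cons.prems by (cases "r - 1") auto
    then show ?thesis using Cons rises_replicate_False_True[of k "marks rs"] by simp
  qed
qed simp

lemma rises_map_Not: "rises (map Not w) = falls w"
  by (induction w rule: rises.induct) auto

lemma falls_map_Not: "falls (map Not w) = rises w"
  by (induction w rule: rises.induct) auto

lemma rises_Cons_append_True: "rises (x # w @ [True]) + (if x then 1 else 0) = Suc (falls (x # w))"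
proof (induction w arbitrary: x)
  case Nil
  then show ?case by simp
next
  case (Cons y w)
  have "rises (x # (y # w) @ [True]) = (if \<not> x \<and> y then 1 else 0) + rises (y # w @ [True])" by simp
  moreover have "falls (x # y # w) = (if x \<and> \<not> y then 1 else 0) + falls (y # w)" by simp
  ultimately show ?case using Cons[of y] by auto
qed

lemma rises_append_False_True: "rises (b @ [False, True]) = Suc (rises b)"
proof (induction b)
  case (Cons x b)
  then show ?case by (cases b) auto
qed simp

lemma le_trues_take_marks_iff: "\<forall>r\<in>set u. 0 < r \<Longrightarrow> 0 < j \<Longrightarrow> j \<le> length u \<Longrightarrow>
   (j \<le> trues (take x (marks u))) = (sum_list (take j u) \<le> x)"
proof (induction u arbitrary: j x)
  case (Cons r u)
  then obtain r' where r: "r = Suc r'" by (cases r) auto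
  show ?case
  proof (cases "x < r")
    case True
    then have "take x (marks (r # u)) = replicate x False" using r by (simp add: take_append)
    moreover have "sum_list (take j (r # u)) \<ge> r" using Cons(3) by (cases j) auto
    ultimately show ?thesis using True Cons(3) by auto
  next
    case False
    then have t: "take x (marks (r # u)) = replicate r' False @ True # take (x - r) (marks u)"
      using r by (simp add: take_append)
      (metis Suc_diff_Suc diff_diff_left not_less_eq plus_1_eq_Suc take_Suc_Cons)
    show ?thesis
    proof (cases "j = 1")
      case True
      then show ?thesis using t False by simp
    next
      case j1: False
      then obtain j' where jj: "j = Suc j'" "0 < j'" using Cons(3) by (cases j) auto
      have "(j' \<le> trues (take (x - r) (marks u))) = (sum_list (take j' u) \<le> x - r)"
        using Cons jj by auto
      then show ?thesis using t jj False by auto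
    qed
  qed
qed simp

lemma sum_list_take_strict_mono: "\<forall>r\<in>set u. 0 < r \<Longrightarrow> j < k \<Longrightarrow> k \<le> length u
    \<Longrightarrow> sum_list (take j u) < sum_list (take k (u :: nat list))"
proof (induction u arbitrary: j k)
  case (Cons r u)
  then obtain k' where k: "k = Suc k'" by (cases k) auto
  show ?case
  proof (cases j)
    case 0
    then show ?thesis using Cons k by simp
  next
    case (Suc j')
    then show ?thesis using Cons k by auto
  qed
qed simp

lemma marks_le_if_sum_take_less:
  assumes pu: "\<forall>r\<in>set u. 0 < r" and pd: "\<forall>r\<in>set d. 0 < r" and len: "length u = length d"
    and su: "sum_list u = n"
    and I: "\<forall>j. 0 < j \<and> j < length u \<longrightarrow> sum_list (take j d) < sum_list (take j u)"
    and x: "1 \<le> x" "x < n"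
  shows "trues (take x (marks u)) \<le> trues (take (x - 1) (marks d))"
proof -
  define j where "j = trues (take x (marks u))"
  show ?thesis
  proof (cases "j = 0")
    case True then show ?thesis unfolding j_def by simp
  next
    case False
    have jl: "j \<le> length u"
      unfolding j_def using trues_take_le[of x "marks u"] trues_marks[of u] by simp
    have g1: "sum_list (take j u) \<le> x"
      using le_trues_take_marks_iff[OF pu, of j x] False jl unfolding j_def by simp
    then have "j \<noteq> length u" using su x by auto
    then have "sum_list (take j d) < sum_list (take j u)" using I False jl by simp
    then have "sum_list (take j d) \<le> x - 1" using g1 by simp
    then have "j \<le> trues (take (x - 1) (marks d))"
      using le_trues_take_marks_iff[OF pd, of j "x - 1"] False jl len by simp
    then show ?thesis unfolding j_def by simp
  qed
qed

lemma sum_take_less_if_marks_le: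
  assumes pu: "\<forall>r\<in>set u. 0 < r" and pd: "\<forall>r\<in>set d. 0 < r" and len: "length u = length d"
    and su: "sum_list u = n"
    and II: "\<forall>x. 1 \<le> x \<and> x < n \<longrightarrow> trues (take x (marks u)) \<le> trues (take (x - 1) (marks d))"
    and j: "0 < j" "j < length u"
  shows "sum_list (take j d) < sum_list (take j u)"
proof -
  define x where "x = sum_list (take j u)"
  have x1: "1 \<le> x"
    using sum_list_take_strict_mono[OF pu, of 0 j] j unfolding x_def by simp
  have xn: "x < n"
    using sum_list_take_strict_mono[OF pu, of j "length u"] j su unfolding x_def by simp
  have "j \<le> trues (take x (marks u))"
    using le_trues_take_marks_iff[OF pu, of j x] j unfolding x_def by simp
  then have "j \<le> trues (take (x - 1) (marks d))" using II x1 xn by (meson le_trans)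
  then have "sum_list (take j d) \<le> x - 1"
    using le_trues_take_marks_iff[OF pd, of j "x - 1"] j len by simp
  then show ?thesis using x1 unfolding x_def by simp
qed

lemma sum_take_less_iff_marks:
  assumes "\<forall>r\<in>set u. 0 < r" "\<forall>r\<in>set d. 0 < r" "length u = length d" "sum_list u = n"
  shows "(\<forall>j. 0 < j \<and> j < length u \<longrightarrow> sum_list (take j d) < sum_list (take j u)) \<longleftrightarrow>
         (\<forall>x. 1 \<le> x \<and> x < n \<longrightarrow> trues (take x (marks u)) \<le> trues (take (x - 1) (marks d)))"
  using marks_le_if_sum_take_less[OF assms] sum_take_less_if_marks_le[OF assms] by blast

lemma marks_eq_Nil_iff: "marks rs = [] \<longleftrightarrow> rs = []"
  by (cases rs) auto

lemma last_marks: "rs \<noteq> [] \<Longrightarrow> marks rs \<noteq> [] \<and> last (marks rs)"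
proof (induction rs)
  case (Cons r rs)
  then show ?case by (cases "rs = []") (auto simp: marks_eq_Nil_iff)
qed simp

lemma butlast_butlast_append2: "butlast (butlast (b @ [y, z])) = b"
  by (metis append.assoc append_Cons append_Nil butlast_snoc)

lemma split_first_last: "length w \<ge> 2 \<Longrightarrow> last w \<Longrightarrow> \<exists>x0 a. w = x0 # a @ [True] \<and> length a = length w - 2"
proof -
  assume a: "length w \<ge> 2" "last w"
  obtain x0 w' where w: "w = x0 # w'" using a by (cases w) auto
  have "w' \<noteq> []" using a w by auto
  then have "w' = butlast w' @ [last w']" by simp
  moreover have "last w' = True" using a w \<open>w' \<noteq> []\<close> by simp
  ultimately have "w = x0 # butlast w' @ [True]" using w by metis
  then show ?thesis using w by (intro exI[of _ x0] exI[of _ "butlast w'"]) auto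
qed

lemma split_last_two: "length w \<ge> 2 \<Longrightarrow> last w \<Longrightarrow> \<exists>b y. w = b @ [y, True] \<and> length b = length w - 2"
proof -
  assume a: "length w \<ge> 2" "last w"
  have ne: "w \<noteq> []" using a by auto
  have w1: "w = butlast w @ [True]" using a ne by (metis append_butlast_last_id)
  have ne2: "butlast w \<noteq> []" using a by (cases w rule: rev_cases) auto
  have w2: "butlast w = butlast (butlast w) @ [last (butlast w)]" using ne2 by simp
  have "w = butlast (butlast w) @ [last (butlast w), True]" using w1 w2
    by (metis append.assoc append_Cons append_Nil)
  then show ?thesis by (intro exI[of _ "butlast (butlast w)"] exI[of _ "last (butlast w)"]) auto
qed

section \<open>The run duality of excursions\<close>

definition dominated :: "bool list \<Rightarrow> bool list \<Rightarrow> bool" where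
  "dominated a b \<longleftrightarrow>
     length a = length b \<and> trues a = trues b \<and> (\<forall>y \<le> length a. trues (take y a) \<le> trues (take y b))"

lemma dominated_map_Not: "dominated a b \<Longrightarrow> dominated (map Not b) (map Not a)"
  unfolding dominated_def
proof (intro conjI allI impI)
  assume a: "length a = length b \<and> trues a = trues b
      \<and> (\<forall>y\<le>length a. trues (take y a) \<le> trues (take y b))"
  show "length (map Not b) = length (map Not a)" using a by simp
  show "trues (map Not b) = trues (map Not a)" using a by (simp add: trues_map_Not)
  fix y assume y: "y \<le> length (map Not b)"
  have "trues (take y a) \<le> trues (take y b)" using a y by simp
  then show "trues (take y (map Not b)) \<le> trues (take y (map Not a))"
    using y a by (simp add: take_map trues_map_Not diff_le_mono2)
qed

text \<open>For an excursion of length \<open>2n \<ge> 4\<close> the first up-run and the last down-run have length at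
  least \<open>2\<close>, so the marks of its up-runs and of its down-runs have the shapes
  \<open>False # a @ [True]\<close> and \<open>b @ [False, True]\<close> with \<open>a\<close>, \<open>b\<close> of length \<open>n - 2\<close>, and the ballot
  condition becomes \<open>dominated a b\<close>.\<close>

definition code_up :: "nat list \<Rightarrow> bool list" where
  "code_up rl = butlast (tl (marks (odds rl)))"

definition code_down :: "nat list \<Rightarrow> bool list" where
  "code_down rl = butlast (butlast (marks (evens rl)))"

definition up_runs :: "bool list \<Rightarrow> nat list" where
  "up_runs a = runs_of_marks 0 (False # a @ [True])"

definition down_runs :: "bool list \<Rightarrow> nat list" where
  "down_runs b = runs_of_marks 0 (b @ [False, True])"

definition decode :: "bool list \<Rightarrow> bool list \<Rightarrow> nat list" where
  "decode a b = interleave (up_runs a) (down_runs b)"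

lemma marks_up_runs: "marks (up_runs a) = False # a @ [True]"
  unfolding up_runs_def using marks_runs_of_marks[of "False # a @ [True]" 0] by simp

lemma marks_down_runs: "marks (down_runs b) = b @ [False, True]"
  unfolding down_runs_def using marks_runs_of_marks[of "b @ [False, True]" 0] by simp

lemma length_up_runs: "length (up_runs a) = Suc (trues a)"
  unfolding up_runs_def length_runs_of_marks by simp

lemma length_down_runs: "length (down_runs b) = Suc (trues b)"
  unfolding down_runs_def length_runs_of_marks by simp

lemma sum_list_up_runs: "sum_list (up_runs a) = length a + 2"
  unfolding up_runs_def by (subst sum_list_runs_of_marks) auto

lemma sum_list_down_runs: "sum_list (down_runs b) = length b + 2"
  unfolding down_runs_def by (subst sum_list_runs_of_marks) auto

lemma long_runs_up_runs: "length (filter (\<lambda>r. 2 \<le> r) (up_runs a)) = Suc (falls a)"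
  using rises_marks[OF runs_of_marks_pos[of 0 "False # a @ [True]"]]
    rises_Cons_append_True[of False a] marks_up_runs[of a]
  by (simp add: up_runs_def falls_False_Cons)

lemma long_runs_down_runs: "length (filter (\<lambda>r. 2 \<le> r) (down_runs b)) = Suc (rises b)"
  using rises_marks[OF runs_of_marks_pos[of 0 "b @ [False, True]"]]
    rises_append_False_True[of b] marks_down_runs[of b]
  by (simp add: down_runs_def)

lemma
  assumes "dominated a b"
  shows odds_decode: "odds (decode a b) = up_runs a"
    and evens_decode: "evens (decode a b) = down_runs b"
proof -
  have "length (up_runs a) = length (down_runs b)"
    using assms unfolding dominated_def length_up_runs length_down_runs by simp
  then show "odds (decode a b) = up_runs a" "evens (decode a b) = down_runs b"
    unfolding decode_def by (simp_all add: odds_interleave evens_interleave)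
qed

lemma pos_decode: "\<forall>r\<in>set (decode a b). 0 < r"
  using set_interleave[of "up_runs a" "down_runs b"] runs_of_marks_pos[of 0 "False # a @ [True]"]
    runs_of_marks_pos[of 0 "b @ [False, True]"]
  unfolding decode_def up_runs_def down_runs_def by blast

lemma code_up_decode: "dominated a b \<Longrightarrow> code_up (decode a b) = a"
  unfolding code_up_def by (simp add: odds_decode marks_up_runs)

lemma code_down_decode: "dominated a b \<Longrightarrow> code_down (decode a b) = b"
  unfolding code_down_def by (simp add: evens_decode marks_down_runs butlast_butlast_append2)

lemma sum_list_decode: "dominated a b \<Longrightarrow> sum_list (decode a b) = 2 * (length a + 2)"
  using sum_list_odds_add_evens[of "decode a b"]
  by (simp add: odds_decode evens_decode sum_list_up_runs sum_list_down_runs dominated_def)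

lemma length_decode: "dominated a b \<Longrightarrow> length (decode a b) = 2 * Suc (trues a)"
  using length_odds_add_evens[of "decode a b"]
  by (simp add: odds_decode evens_decode length_up_runs length_down_runs dominated_def)

lemma long_runs_decode:
  "dominated a b \<Longrightarrow> length (filter (\<lambda>r. 2 \<le> r) (decode a b)) = Suc (falls a) + Suc (rises b)"
  using length_filter_odds_add_evens[of "\<lambda>r. 2 \<le> r" "decode a b"]
  by (simp add: odds_decode evens_decode long_runs_up_runs long_runs_down_runs)

lemma runs_excursion_from_decode:
  assumes dom: "dominated a b"
  shows "runs_excursion_from 0 (decode a b)"
proof -
  define u d n where "u = up_runs a" and "d = down_runs b" and "n = length a + 2"
  have lab: "length a = length b" and dom': "\<forall>y \<le> length a. trues (take y a) \<le> trues (take y b)"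
    using dom unfolding dominated_def by auto
  have pu: "\<forall>r\<in>set u. 0 < r" and pd: "\<forall>r\<in>set d. 0 < r"
    unfolding u_def d_def n_def up_runs_def down_runs_def by (simp_all add: runs_of_marks_pos)
  have lud: "length u = length d"
    using dom unfolding u_def d_def n_def length_up_runs length_down_runs dominated_def by simp
  have su: "sum_list u = n" and sd: "sum_list d = n"
    unfolding u_def d_def n_def sum_list_up_runs sum_list_down_runs using lab by simp_all
  have "trues (take x (marks u)) \<le> trues (take (x - 1) (marks d))" if x: "1 \<le> x" "x < n" for x
  proof -
    obtain x' where "x = Suc x'" using x by (cases x) auto
    then show ?thesis using x lab dom'[rule_format, of x']
      unfolding u_def d_def n_def marks_up_runs marks_down_runs by simp
  qed
  then have "\<forall>j. 0 < j \<and> j < length u \<longrightarrow> sum_list (take j d) < sum_list (take j u)"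
    using sum_take_less_iff_marks[OF pu pd lud su] by blast
  then have "ballot 0 u d"
    unfolding ballot_def using lud su sd by (auto simp: u_def d_def n_def length_up_runs)
  then show ?thesis
    unfolding decode_def u_def[symmetric] d_def[symmetric] using runs_excursion_from_interleave[OF lud]
      by simp
qed

lemma ballot_marks_shape:
  assumes bal: "ballot 0 u d" and pu: "\<forall>r\<in>set u. 0 < r" and pd: "\<forall>r\<in>set d. 0 < r"
    and n2: "2 \<le> sum_list u"
  obtains a b where "marks u = False # a @ [True]" "marks d = b @ [False, True]" "dominated a b"
proof -
  define n where "n = sum_list u"
  have lud: "length u = length d" and sd: "sum_list d = n" and une: "u \<noteq> []"
    and I: "\<forall>j. 0 < j \<and> j < length u \<longrightarrow> sum_list (take j d) < sum_list (take j u)"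
    using bal unfolding ballot_def n_def by auto
  have II: "\<forall>x. 1 \<le> x \<and> x < n \<longrightarrow> trues (take x (marks u)) \<le> trues (take (x - 1) (marks d))"
    using sum_take_less_iff_marks[OF pu pd lud n_def[symmetric]] I by blast
  have dne: "d \<noteq> []" using une lud by auto
  have la: "length (marks u) = n" using length_marks[OF pu] n_def by simp
  have lb: "length (marks d) = n" using length_marks[OF pd] sd by simp
  obtain x0 a where A: "marks u = x0 # a @ [True]" "length a = n - 2"
    using split_first_last[of "marks u"] la n2 last_marks[OF une] n_def by auto
  obtain b y where B: "marks d = b @ [y, True]" "length b = n - 2"
    using split_last_two[of "marks d"] lb n2 last_marks[OF dne] n_def by auto
  have "trues (take 1 (marks u))
      \<le> trues (take 0 (marks d))" using II[rule_format, of 1] n2 n_def by simp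
  then have x0: "x0 = False" using A by (cases x0) auto
  have dom: "trues (take y' a) \<le> trues (take y' b)" if y': "y' \<le> length a" for y'
  proof -
    have "trues (take (Suc y') (marks u)) \<le> trues (take (Suc y' - 1) (marks d))"
      using II[rule_format, of "Suc y'"] y' A n2 n_def by simp
    moreover have "take (Suc y') (marks u) = x0 # take y' a" using A y' by simp
    moreover have "take y' (marks d) = take y' b" using B y' A by simp
    ultimately show ?thesis using x0 by simp
  qed
  have "trues (marks u) = trues (marks d)" using trues_marks[of u] trues_marks[of d] lud by simp
  moreover have "trues a \<le> trues b" using dom[of "length a"] A B by simp
  ultimately have "y = False" and "trues a = trues b" using A B x0 by (cases y; auto)+
  then show ?thesis using that A B x0 dom unfolding dominated_def by simp
qed

lemma decode_code:
  assumes ex: "runs_excursion_from 0 rl" and pos: "\<forall>r\<in>set rl. 0 < r" and big: "4 \<le> sum_list rl"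
  shows "dominated (code_up rl) (code_down rl)" and "decode (code_up rl) (code_down rl) = rl"
proof -
  define u d where "u = odds rl" and "d = evens rl"
  have bal: "ballot 0 u d" using ballot_odds_evens[OF ex] unfolding u_def d_def .
  have "sum_list u = sum_list d" using bal unfolding ballot_def by simp
  then have n2: "2 \<le> sum_list u" using big sum_list_odds_add_evens[of rl] unfolding u_def d_def by simp
  have pu: "\<forall>r\<in>set u. 0 < r" and pd: "\<forall>r\<in>set d. 0 < r"
    using pos set_odds[of rl] set_evens[of rl] unfolding u_def d_def by blast+
  obtain a b where A: "marks u = False # a @ [True]" and B: "marks d = b @ [False, True]"
    and dom: "dominated a b"
    using ballot_marks_shape[OF bal pu pd n2] .
  have c: "code_up rl = a" "code_down rl = b"
    unfolding code_up_def code_down_def u_def[symmetric] d_def[symmetric] A B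
    by (simp_all add: butlast_butlast_append2)
  have "up_runs a = u" "down_runs b = d"
    unfolding up_runs_def down_runs_def A[symmetric] B[symmetric]
    using runs_of_marks_marks[OF pu] runs_of_marks_marks[OF pd] by simp_all
  then have "decode a b = rl"
    unfolding decode_def u_def d_def
    using interleave_odds_evens even_length_runs_excursion_from[OF ex] by simp
  then show "dominated (code_up rl) (code_down rl)" "decode (code_up rl) (code_down rl) = rl"
    using c dom by simp_all
qed

definition dual_runs :: "nat list \<Rightarrow> nat list" where
  "dual_runs rl = decode (map Not (code_down rl)) (map Not (code_up rl))"

definition dual_word :: "int list \<Rightarrow> int list" where
  "dual_word xs = word_of_runs (hd xs) (dual_runs (runlens xs))"

definition excursions :: "nat \<Rightarrow> int list set" where
  "excursions N = {xs. set xs \<subseteq> {1, -1} \<and> length xs = N \<and> excursion xs}"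

lemma runs_excursion_from_runlens:
  assumes pm: "set xs \<subseteq> {1, -1}" and ex: "excursion xs"
  shows "runs_excursion_from 0 (runlens xs)"
proof -
  define rl where "rl = runlens xs"
  have ne: "xs \<noteq> []" using ex unfolding excursion_def by simp
  have pos: "\<forall>r\<in>set rl. 0 < r" unfolding rl_def by (rule runlens_pos)
  have rl_ne: "rl \<noteq> []" unfolding rl_def using runlens_not_Nil[OF ne] .
  have "hd xs \<in> {1, -1}" using pm ne hd_in_set by blast
  moreover have "xs = word_of_runs (hd xs) rl" unfolding rl_def using word_of_runs_runlens[OF ne pm] by simp
  ultimately have "excursion (word_of_runs 1 rl)" using ex excursion_word_of_runs by metis
  moreover have "set (word_of_runs 1 rl) \<subseteq> {1, -1}" using set_word_of_runs[of 1 rl] by simp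
  moreover have "hd (word_of_runs 1 rl) = 1" using hd_word_of_runs[OF rl_ne] pos rl_ne by simp
  ultimately show ?thesis
    using excursion_iff_pos_excursion_from pos_excursion_from_word_of_runs[of 0 rl] pos
    unfolding rl_def by simp
qed

lemma runlens_word_of_runs_decode: "s \<in> {1, -1} \<Longrightarrow> runlens (word_of_runs s (decode a b)) = decode a b"
  using runlens_word_of_runs[OF _ pos_decode] by auto

lemma hd_word_of_runs_decode:
  assumes "dominated a b"
  shows "hd (word_of_runs s (decode a b)) = s"
proof -
  have ne: "decode a b \<noteq> []" using length_decode[OF assms] by auto
  then have "0 < hd (decode a b)" using pos_decode hd_in_set by blast
  then show ?thesis by (rule hd_word_of_runs[OF ne])
qed

lemma word_of_runs_decode_in_excursions:
  assumes dom: "dominated a b" and s: "s \<in> {1, -1}"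
  shows "word_of_runs s (decode a b) \<in> excursions (2 * (length a + 2))"
proof -
  define rl where "rl = decode a b"
  have "pos_excursion_from 0 (word_of_runs 1 rl)"
    unfolding rl_def using pos_excursion_from_word_of_runs[OF _ pos_decode] runs_excursion_from_decode[OF dom]
    by simp
  moreover have "set (word_of_runs 1 rl) \<subseteq> {1, -1}" using set_word_of_runs[of 1 rl] by simp
  moreover have "hd (word_of_runs 1 rl) = 1" unfolding rl_def using hd_word_of_runs_decode[OF dom] .
  ultimately have "excursion (word_of_runs s rl)"
    using excursion_iff_pos_excursion_from excursion_word_of_runs[OF s] by simp
  moreover have "set (word_of_runs s rl) \<subseteq> {1, -1}" using set_word_of_runs[of s rl] s by auto
  ultimately show ?thesis
    unfolding excursions_def rl_def by (simp add: length_word_of_runs sum_list_decode[OF dom])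
qed

lemma excursions_decode_form:
  assumes xs: "xs \<in> excursions N" and N: "4 \<le> N"
  obtains a b s where "dominated a b" "s \<in> {1, -1}" "xs = word_of_runs s (decode a b)"
    "N = 2 * (length a + 2)"
proof -
  have pm: "set xs \<subseteq> {1, -1}" and ex: "excursion xs" and len: "length xs = N"
    using xs unfolding excursions_def by auto
  have ne: "xs \<noteq> []" using ex unfolding excursion_def by simp
  define rl where "rl = runlens xs"
  have ok: "runs_excursion_from 0 rl" unfolding rl_def using runs_excursion_from_runlens[OF pm ex] .
  have big: "4 \<le> sum_list rl" unfolding rl_def sum_list_runlens len using N .
  note dc = decode_code[OF ok runlens_pos[of xs, folded rl_def] big]
  have "hd xs \<in> {1, -1}" using pm ne hd_in_set by blast
  moreover have "xs = word_of_runs (hd xs) (decode (code_up rl) (code_down rl))"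
    using word_of_runs_runlens[OF ne pm] dc(2) unfolding rl_def by simp
  moreover have "N = 2 * (length (code_up rl) + 2)"
    using sum_list_decode[OF dc(1)] dc(2) big sum_list_runlens[of xs] len unfolding rl_def by simp
  ultimately show ?thesis using that dc(1) by blast
qed

lemma dual_word_decode:
  assumes "dominated a b" "s \<in> {1, -1}"
  shows "dual_word (word_of_runs s (decode a b)) = word_of_runs s (decode (map Not b) (map Not a))"
  using assms unfolding dual_word_def dual_runs_def
  by (simp add: hd_word_of_runs_decode runlens_word_of_runs_decode code_up_decode code_down_decode)

lemma
  assumes "xs \<in> excursions N" "4 \<le> N"
  shows dual_word_in_excursions: "dual_word xs \<in> excursions N"
    and num_runs_dual_word: "num_runs (dual_word xs) = N - num_runs xs"
    and num_long_runs_dual_word: "num_long_runs (dual_word xs) = num_long_runs xs"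
    and dual_word_dual_word: "dual_word (dual_word xs) = xs"
proof -
  obtain a b s where dom: "dominated a b" and s: "s \<in> {1, -1}"
    and xs: "xs = word_of_runs s (decode a b)" and N: "N = 2 * (length a + 2)"
    using excursions_decode_form[OF assms] .
  have dom': "dominated (map Not b) (map Not a)" using dominated_map_Not[OF dom] .
  have lab: "length a = length b" "trues a = trues b" using dom unfolding dominated_def by auto
  have dual: "dual_word xs = word_of_runs s (decode (map Not b) (map Not a))"
    unfolding xs using dual_word_decode[OF dom s] .
  show "dual_word xs \<in> excursions N"
    unfolding dual N using word_of_runs_decode_in_excursions[OF dom' s] lab by simp
  have runs: "runlens xs = decode a b"
    "runlens (dual_word xs) = decode (map Not b) (map Not a)"
    using dual xs runlens_word_of_runs_decode[OF s] by simp_all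
  show "num_runs (dual_word xs) = N - num_runs xs"
    unfolding num_runs_def runs length_decode[OF dom] length_decode[OF dom'] N
    using lab trues_le_length[of b] by (simp add: trues_map_Not)
  show "num_long_runs (dual_word xs) = num_long_runs xs"
    unfolding num_long_runs_def runs long_runs_decode[OF dom] long_runs_decode[OF dom']
    by (simp add: rises_map_Not falls_map_Not)
  show "dual_word (dual_word xs) = xs"
    unfolding dual using dual_word_decode[OF dom' s] xs by (simp add: comp_def)
qed

lemma bij_betw_dual_word: "4 \<le> N \<Longrightarrow> bij_betw dual_word (excursions N) (excursions N)"
  by (rule bij_betw_byWitness[where f' = dual_word])
    (auto simp: dual_word_dual_word dual_word_in_excursions)

lemma num_runs_le_length_excursions:
  "xs \<in> excursions N \<Longrightarrow> 0 < num_runs xs \<and> num_runs xs \<le> N"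
  using num_runs_pos[of xs] num_runs_le_length[of xs] unfolding excursions_def excursion_def by auto

lemma card_excursions_num_runs_dual:
  assumes N: "4 \<le> N"
  shows "card {xs \<in> excursions N. num_runs xs = r \<and> num_long_runs xs = l}
       = card {xs \<in> excursions N. num_runs xs = N - r \<and> num_long_runs xs = l}"
proof (cases "r \<le> N")
  case True
  have "bij_betw dual_word {xs \<in> excursions N. num_runs xs = r \<and> num_long_runs xs = l}
      {xs \<in> excursions N. num_runs xs = N - r \<and> num_long_runs xs = l}"
    using True num_runs_le_length_excursions
    by (intro bij_betw_byWitness[where f' = dual_word])
      (auto simp: N dual_word_dual_word dual_word_in_excursions num_runs_dual_word num_long_runs_dual_word)
  then show ?thesis by (rule bij_betw_same_card)
next
  case False
  then show ?thesis using num_runs_le_length_excursions[of _ N] by (metis (no_types, lifting) diff_is_0_eq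
      empty_Collect_eq less_imp_le not_less not_gr_zero)
qed

section \<open>Finite-dimensional distributions of the walk\<close>

definition coin_weight :: "real \<Rightarrow> bool list \<Rightarrow> real" where
  "coin_weight p cs = prod_list (map (\<lambda>c. if c then p else 1 - p) cs)"

abbreviation coins :: "real \<Rightarrow> bool stream measure" where
  "coins p \<equiv> stream_space (measure_pmf (bernoulli_pmf p))"

lemma sets_coins: "sets (coins p) = sets (stream_space (count_space UNIV))"
  by (rule sets_stream_space_cong) simp

lemma space_coins[simp]: "space (coins p) = UNIV"
  by (simp add: space_stream_space)

lemma measurable_stake_coins: "stake m \<in> measurable (coins p) (count_space UNIV)"
  using measurable_stake[of m] measurable_cong_sets[OF sets_coins refl] by blast

lemma sets_stake_eq: "{X. stake m X = cs} \<in> sets (coins p)"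
proof -
  have "stake m -` {cs} \<inter> space (coins p) \<in> sets (coins p)"
    by (rule measurable_sets[OF measurable_stake_coins]) simp
  moreover have "stake m -` {cs} \<inter> space (coins p) = {X. stake m X = cs}" by auto
  ultimately show ?thesis by simp
qed

lemma prob_space_coins: "prob_space (coins p)"
  by (rule prob_space.prob_space_stream_space[OF prob_space_measure_pmf])

lemma emeasure_stake_eq:
  assumes p: "0 \<le> p" "p \<le> 1"
  shows "emeasure (coins p) {X. stake (length cs) X = cs} = ennreal (coin_weight p cs)"
proof (induction cs)
  case Nil
  interpret S: prob_space "coins p" by (rule prob_space_coins)
  have "{X. stake (length []) X = []} = space (coins p)" by simp
  then show ?case using S.emeasure_space_1 by (simp add: coin_weight_def)
next
  case (Cons c cs)
  have meas: "{X. stake (length (c # cs)) X = c # cs} \<in> sets (coins p)" by (rule sets_stake_eq)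
  have "emeasure (coins p) {X. stake (length (c # cs)) X = c # cs}
      = (\<integral>\<^sup>+t. emeasure (coins p) {x \<in> space (coins p). t ## x \<in> {X. stake (length (c # cs)) X = c # cs}}
          \<partial>measure_pmf (bernoulli_pmf p))"
    using prob_space.emeasure_stream_space[OF prob_space_measure_pmf meas] .
  also have "\<dots> = (\<integral>\<^sup>+t. emeasure (coins p) {X. stake (length cs) X = cs} * indicator {c} t
      \<partial>measure_pmf (bernoulli_pmf p))"
    by (intro nn_integral_cong) (auto split: split_indicator)
  also have "\<dots> = emeasure (coins p) {X. stake (length cs) X = cs}
      * emeasure (measure_pmf (bernoulli_pmf p)) {c}"
    by (rule nn_integral_cmult_indicator) simp
  also have "\<dots> = ennreal (coin_weight p cs) * ennreal (pmf (bernoulli_pmf p) c)"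
    using Cons by (simp add: emeasure_pmf_single)
  also have "\<dots> = ennreal (coin_weight p (c # cs))"
    using p by (cases c) (auto simp: coin_weight_def ennreal_mult'[symmetric] mult.commute)
  finally show ?case .
qed

lemma coin_weight_nonneg: "0 \<le> p \<Longrightarrow> p \<le> 1 \<Longrightarrow> 0 \<le> coin_weight p cs"
  unfolding coin_weight_def by (induction cs) auto

lemma prob_space_PRW: "prob_space (PRW a)"
  unfolding PRW_def by (rule prob_space_pair[OF prob_space_measure_pmf prob_space_coins])

lemma space_PRW[simp]: "space (PRW a) = UNIV"
  unfolding PRW_def by (simp add: space_pair_measure)

definition cylinder :: "nat \<Rightarrow> bool \<times> bool list \<Rightarrow> (bool \<times> bool stream) set" where
  "cylinder m z = {\<omega>. fst \<omega> = fst z \<and> stake m (snd \<omega>) = snd z}"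

lemma cylinder_eq_Times: "cylinder m z = {fst z} \<times> {X. stake m X = snd z}"
  unfolding cylinder_def by auto

lemma sets_cylinder: "cylinder m z \<in> sets (PRW a)"
  unfolding cylinder_eq_Times PRW_def by (rule pair_measureI) (auto intro: sets_stake_eq)

lemma measure_cylinder:
  assumes "0 \<le> a" "a \<le> 1" "length (snd z) = m"
  shows "measure (PRW a) (cylinder m z) = 1/2 * coin_weight a (snd z)"
proof -
  interpret S: prob_space "coins a" by (rule prob_space_coins)
  have "emeasure (PRW a) (cylinder m z)
      = emeasure (measure_pmf (bernoulli_pmf (1/2))) {fst z} * emeasure (coins a) {X. stake m X = snd z}"
    unfolding cylinder_eq_Times PRW_def by (rule S.emeasure_pair_measure_Times) (auto intro: sets_stake_eq)
  also have "\<dots> = ennreal (1/2) * ennreal (coin_weight a (snd z))"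
    using emeasure_stake_eq[OF assms(1,2), of "snd z"] assms(3)
      by (cases "fst z") (auto simp: emeasure_pmf_single)
  also have "\<dots> = ennreal (1/2 * coin_weight a (snd z))" using coin_weight_nonneg[OF assms(1,2)]
    by (intro ennreal_mult[symmetric]) auto
  finally show ?thesis unfolding measure_def using coin_weight_nonneg[OF assms(1,2)] by simp
qed

lemma integral_indicator_cylinder_scaleR:
  fixes c :: "'b::{banach, second_countable_topology}"
  assumes "0 \<le> a" "a \<le> 1" "length (snd z) = m"
  shows "(\<integral>\<omega>. indicator (cylinder m z) \<omega> *\<^sub>R c \<partial>PRW a) = (1/2 * coin_weight a (snd z)) *\<^sub>R c"
proof -
  interpret P: prob_space "PRW a" by (rule prob_space_PRW)
  have "integrable (PRW a) (indicator (cylinder m z) :: _ \<Rightarrow> real)"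
    by (intro integrable_real_indicator sets_cylinder) (simp add: less_top[symmetric] P.emeasure_finite)
  then show ?thesis using measure_cylinder[OF assms] sets_cylinder[of m z a]
    by (simp add: P.emeasure_finite less_top[symmetric])
qed

lemma integral_cylinder_fun:
  fixes f :: "bool \<times> bool list \<Rightarrow> 'b::{banach, second_countable_topology}"
  assumes "0 \<le> a" "a \<le> 1"
  shows "(\<integral>\<omega>. f (fst \<omega>, stake m (snd \<omega>)) \<partial>PRW a)
       = (\<Sum>z\<in>UNIV \<times> {cs. length cs = m}. (1/2 * coin_weight a (snd z)) *\<^sub>R f z)"
proof -
  interpret P: prob_space "PRW a" by (rule prob_space_PRW)
  define Z where "Z = (UNIV :: bool set) \<times> {cs :: bool list. length cs = m}"
  have fin: "finite Z"
    unfolding Z_def using finite_lists_length_eq[of "UNIV :: bool set" m] by simp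
  have "f (fst \<omega>, stake m (snd \<omega>)) = (\<Sum>z\<in>Z. indicator (cylinder m z) \<omega> *\<^sub>R f z)" for \<omega>
  proof -
    have "(\<Sum>z\<in>Z. indicator (cylinder m z) \<omega> *\<^sub>R f z)
        = (\<Sum>z\<in>Z. if z = (fst \<omega>, stake m (snd \<omega>)) then f z else 0)"
      by (intro sum.cong refl) (auto simp: cylinder_def split: split_indicator)
    then show ?thesis using fin by (simp add: Z_def)
  qed
  then have "(\<integral>\<omega>. f (fst \<omega>, stake m (snd \<omega>)) \<partial>PRW a)
      = (\<integral>\<omega>. (\<Sum>z\<in>Z. indicator (cylinder m z) \<omega> *\<^sub>R f z) \<partial>PRW a)"
    by simp
  also have "\<dots> = (\<Sum>z\<in>Z. \<integral>\<omega>. indicator (cylinder m z) \<omega> *\<^sub>R f z \<partial>PRW a)"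
    by (intro Bochner_Integration.integral_sum integrable_scaleR_left integrable_real_indicator
        sets_cylinder) (simp add: less_top[symmetric] P.emeasure_finite)
  also have "\<dots> = (\<Sum>z\<in>Z. (1/2 * coin_weight a (snd z)) *\<^sub>R f z)"
    by (intro sum.cong refl integral_indicator_cylinder_scaleR[OF assms]) (auto simp: Z_def)
  finally show ?thesis unfolding Z_def .
qed

lemma measurable_cylinder_fun: "(\<lambda>\<omega>. (fst \<omega>, stake m (snd \<omega>))) \<in> measurable (PRW a) (count_space UNIV)"
proof (rule measurable_count_space_eq2_countable[THEN iffD2], safe)
  fix z :: "bool \<times> bool list"
  have "(\<lambda>\<omega>. (fst \<omega>, stake m (snd \<omega>))) -` {z} \<inter> space (PRW a) = cylinder m z"
  proof (intro set_eqI)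
    fix \<omega> :: "bool \<times> bool stream"
    show "\<omega> \<in> (\<lambda>\<omega>. (fst \<omega>, stake m (snd \<omega>))) -` {z} \<inter> space (PRW a) \<longleftrightarrow> \<omega> \<in> cylinder m z"
      unfolding cylinder_def space_PRW by (cases z) auto
  qed
  then show "(\<lambda>\<omega>. (fst \<omega>, stake m (snd \<omega>))) -` {z} \<inter> space (PRW a) \<in> sets (PRW a)"
    using sets_cylinder
    by simp
qed auto

definition sign_of :: "bool \<Rightarrow> int" where "sign_of b = (if b then 1 else -1)"

fun path_of_coins :: "int \<Rightarrow> bool list \<Rightarrow> int list" where
  "path_of_coins s [] = [s]"
| "path_of_coins s (c # cs) = s # path_of_coins (if c then s else -s) cs"

definition increments :: "bool \<times> bool stream \<Rightarrow> nat \<Rightarrow> int list" where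
  "increments \<omega> N = map (eps \<omega>) [1..<N+1]"

lemma increments_shift: "map (eps \<omega>) [Suc k..<Suc k + Suc m]
    = path_of_coins (eps \<omega> (Suc k)) (stake m (sdrop k (snd \<omega>)))"
proof (induction m arbitrary: k)
  case 0
  then show ?case by simp
next
  case (Suc m)
  have "[Suc k..<Suc k + Suc (Suc m)] = Suc k # [Suc (Suc k)..<Suc (Suc k) + Suc m]"
    by (simp add: upt_conv_Cons)
  then have "map (eps \<omega>) [Suc k..<Suc k + Suc (Suc m)]
      = eps \<omega> (Suc k) # path_of_coins (eps \<omega> (Suc (Suc k))) (stake m (sdrop (Suc k) (snd \<omega>)))"
    using Suc[of "Suc k"] by simp
  moreover have "stake (Suc m) (sdrop k (snd \<omega>)) = (snd \<omega> !! k) # stake m (sdrop (Suc k) (snd \<omega>))"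
    by (simp add: sdrop_snth)
  moreover have "eps \<omega> (Suc (Suc k)) = (if snd \<omega> !! k then eps \<omega> (Suc k) else - eps \<omega> (Suc k))"
    by simp
  ultimately show ?case by simp
qed

lemma increments_path_of_coins: "increments \<omega> (Suc m)
    = path_of_coins (sign_of (fst \<omega>)) (stake m (snd \<omega>))"
  using increments_shift[of \<omega> 0 m] unfolding increments_def sign_of_def by simp

lemma increments_0: "increments \<omega> 0 = []" unfolding increments_def by simp

lemma length_increments[simp]: "length (increments \<omega> N) = N" unfolding increments_def by simp

lemma set_path_of_coins: "s \<in> {1,-1} \<Longrightarrow> set (path_of_coins s cs) \<subseteq> {1,-1}"
  by (induction s cs rule: path_of_coins.induct) auto

lemma length_path_of_coins[simp]: "length (path_of_coins s cs) = Suc (length cs)"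
  by (induction s cs rule: path_of_coins.induct) auto

lemma hd_path_of_coins[simp]: "hd (path_of_coins s cs) = s"
  by (cases cs) auto

text \<open>\<open>path_weight a xs / 2\<close> is the probability that the walk starts with the increments \<open>xs\<close>.\<close>

fun path_weight :: "real \<Rightarrow> int list \<Rightarrow> real" where
  "path_weight a (x # y # zs) = (if x = y then a else 1 - a) * path_weight a (y # zs)"
| "path_weight a _ = 1"

lemma path_weight_path_of_coins: "s \<noteq> 0 \<Longrightarrow> path_weight a (path_of_coins s cs) = coin_weight a cs"
proof (induction s cs rule: path_of_coins.induct)
  case (2 s c cs)
  define s' where "s' = (if c then s else -s)"
  obtain y ys where yy: "path_of_coins s' cs = y # ys" by (cases cs) auto
  have ys': "y = s'" using hd_path_of_coins[of s' cs] yy by simp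
  have "path_weight a (path_of_coins s (c # cs)) = path_weight a (s # y # ys)" using yy unfolding s'_def
    by simp
  also have "\<dots> = (if s = y then a else 1 - a) * path_weight a (y # ys)" by simp
  also have "\<dots> = (if c then a else 1 - a) * path_weight a (path_of_coins s' cs)" using yy ys' 2(2)
    unfolding s'_def by auto
  also have "\<dots> = (if c then a else 1 - a) * coin_weight a cs" using 2 unfolding s'_def by auto
  finally show ?case by (simp add: coin_weight_def)
qed (simp add: coin_weight_def)

definition pm_words :: "nat \<Rightarrow> int list set" where
  "pm_words N = {xs. set xs \<subseteq> {1,-1} \<and> length xs = N}"

lemma finite_pm_words: "finite (pm_words N)"
  unfolding pm_words_def by (rule finite_lists_length_eq) simp

fun coins_of_word :: "int list \<Rightarrow> bool list" where
  "coins_of_word (x # y # zs) = (x = y) # coins_of_word (y # zs)"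
| "coins_of_word _ = []"

lemma path_of_coins_of_word: "xs \<noteq> [] \<Longrightarrow> set xs \<subseteq> {1,-1} \<Longrightarrow> path_of_coins (hd xs) (coins_of_word xs) = xs"
proof (induction xs rule: coins_of_word.induct)
  case (1 x y zs)
  have "(if x = y then x else -x) = y" using 1(3) by auto
  then show ?case using 1 by simp
qed auto

lemma length_coins_of_word: "length (coins_of_word xs) = length xs - 1"
  by (induction xs rule: coins_of_word.induct) auto

lemma path_of_coins_not_Nil[simp]: "path_of_coins s cs \<noteq> []" "[] \<noteq> path_of_coins s cs"
  by (cases cs; auto)+

lemma path_of_coins_inj: "s \<noteq> 0 \<Longrightarrow> path_of_coins s cs = path_of_coins s' cs' \<Longrightarrow> s = s' \<and> cs = cs'"
proof (induction s cs arbitrary: s' cs' rule: path_of_coins.induct)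
  case (1 s)
  then show ?case by (cases cs') auto
next
  case (2 s c cs)
  then obtain c' cs'' where cs': "cs' = c' # cs''" by (cases cs') auto
  have ss: "s = s'" using 2(3) cs' by simp
  have "path_of_coins (if c then s else -s) cs
      = path_of_coins (if c' then s' else -s') cs''" using 2(3) cs'
    by simp
  moreover have "(if c then s else -s) \<noteq> 0" using 2(2) by simp
  ultimately have e: "(if c then s else -s) = (if c' then s' else -s') \<and> cs = cs''" using 2(1) by blast
  then have "c = c'" using ss 2(2) by (cases c; cases c'; auto)
  then show ?case using ss cs' e by simp
qed

lemma bij_betw_path_of_coins:
  "bij_betw (\<lambda>z. path_of_coins (sign_of (fst z)) (snd z)) (UNIV \<times> {cs. length cs = m}) (pm_words (Suc m))"
proof (rule bij_betwI')
  fix x y :: "bool \<times> bool list" assume "x \<in> UNIV \<times> {cs. length cs = m}" "y \<in> UNIV \<times> {cs. length cs = m}"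
  show "(path_of_coins (sign_of (fst x)) (snd x) = path_of_coins (sign_of (fst y)) (snd y)) = (x = y)"
  proof
    assume "path_of_coins (sign_of (fst x)) (snd x) = path_of_coins (sign_of (fst y)) (snd y)"
    then have "sign_of (fst x) = sign_of (fst y) \<and> snd x = snd y"
      by (intro path_of_coins_inj) (auto simp: sign_of_def)
    then show "x = y" by (cases x; cases y; cases "fst x"; cases "fst y"; auto simp: sign_of_def)
  qed simp
next
  fix x :: "bool \<times> bool list" assume "x \<in> UNIV \<times> {cs. length cs = m}"
  moreover have "set (path_of_coins (sign_of (fst x)) (snd x)) \<subseteq> {1,-1}"
    by (rule set_path_of_coins) (simp add: sign_of_def)
  ultimately show "path_of_coins (sign_of (fst x)) (snd x) \<in> pm_words (Suc m)" unfolding pm_words_def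
    by auto
next
  fix xs assume xs: "xs \<in> pm_words (Suc m)"
  then have ne: "xs \<noteq> []" and s: "set xs \<subseteq> {1,-1}" and l: "length xs = Suc m"
    unfolding pm_words_def by auto
  have h: "hd xs \<in> {1,-1}" using ne s by (meson hd_in_set subsetD)
  define b where "b = (hd xs = 1)"
  have "sign_of b = hd xs" using h unfolding b_def sign_of_def by auto
  then have "xs = path_of_coins (sign_of (fst (b, coins_of_word xs))) (snd (b, coins_of_word xs))"
    using path_of_coins_of_word[OF ne s] by simp
  moreover have "(b, coins_of_word xs) \<in> UNIV \<times> {cs. length cs = m}" using l
    by (simp add: length_coins_of_word)
  ultimately show "\<exists>z\<in>UNIV \<times> {cs. length cs = m}. xs = path_of_coins (sign_of (fst z)) (snd z)"
    by blast
qed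

lemma integral_increments:
  fixes F :: "int list \<Rightarrow> 'b::{banach, second_countable_topology}"
  assumes "0 \<le> a" "a \<le> 1"
  shows "integral\<^sup>L (PRW a) (\<lambda>\<omega>. F (increments \<omega> (Suc m)))
      = (\<Sum>xs\<in>pm_words (Suc m). (1/2 * path_weight a xs) *\<^sub>R F xs)"
proof -
  have "integral\<^sup>L (PRW a) (\<lambda>\<omega>. F (increments \<omega> (Suc m)))
      = integral\<^sup>L (PRW a) (\<lambda>\<omega>. (\<lambda>z. F (path_of_coins (sign_of (fst z)) (snd z))) (fst \<omega>, stake m (snd \<omega>)))"
    by (simp add: increments_path_of_coins)
  also have "\<dots> = (\<Sum>z\<in>UNIV \<times> {cs. length cs = m}.
      (1/2 * coin_weight a (snd z)) *\<^sub>R F (path_of_coins (sign_of (fst z)) (snd z)))"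
    by (rule integral_cylinder_fun[OF assms])
  also have "\<dots> = (\<Sum>z\<in>UNIV \<times> {cs. length cs = m}.
      (\<lambda>xs. (1/2 * path_weight a xs) *\<^sub>R F xs) (path_of_coins (sign_of (fst z)) (snd z)))"
    by (intro sum.cong refl) (simp add: path_weight_path_of_coins sign_of_def)
  also have "\<dots> = (\<Sum>xs\<in>pm_words (Suc m). (1/2 * path_weight a xs) *\<^sub>R F xs)"
    by (rule sum.reindex_bij_betw[OF bij_betw_path_of_coins])
  finally show ?thesis .
qed

lemma measurable_increments: "(\<lambda>\<omega>. increments \<omega> N) \<in> measurable (PRW a) (count_space UNIV)"
proof (cases N)
  case 0
  then show ?thesis by (simp add: increments_0)
next
  case (Suc m)
  have "(\<lambda>\<omega>. increments \<omega> N) = (\<lambda>z. path_of_coins (sign_of (fst z)) (snd z)) \<circ> (\<lambda>\<omega>. (fst \<omega>, stake m (snd \<omega>)))"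
    using Suc by (auto simp: increments_path_of_coins)
  then show ?thesis using measurable_cylinder_fun by (simp add: measurable_comp)
qed

lemma sets_increments: "{\<omega>. P (increments \<omega> N)} \<in> sets (PRW a)"
proof -
  have "(\<lambda>\<omega>. increments \<omega> N) -` {xs. P xs} \<inter> space (PRW a) \<in> sets (PRW a)"
    by (rule measurable_sets[OF measurable_increments]) simp
  then show ?thesis by (simp add: vimage_def)
qed

lemma measure_increments:
  assumes "0 \<le> a" "a \<le> 1"
  shows "measure (PRW a) {\<omega>. P (increments \<omega> (Suc m))}
      = (\<Sum>xs\<in>pm_words (Suc m). if P xs then 1/2 * path_weight a xs else 0)"
proof -
  have "measure (PRW a) {\<omega>. P (increments \<omega> (Suc m))}
      = integral\<^sup>L (PRW a) (indicator {\<omega>. P (increments \<omega> (Suc m))})"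
    by simp
  also have "\<dots> = integral\<^sup>L (PRW a) (\<lambda>\<omega>. (\<lambda>xs. if P xs then 1 else 0 :: real) (increments \<omega> (Suc m)))"
    by (intro Bochner_Integration.integral_cong refl) (auto split: split_indicator)
  also have "\<dots> = (\<Sum>xs\<in>pm_words (Suc m). (1/2 * path_weight a xs) *\<^sub>R (if P xs then 1 else 0 :: real))"
    by (rule integral_increments[OF assms])
  finally show ?thesis by (simp add: if_distrib cong: if_cong)
qed

section \<open>The first return time\<close>

definition returns :: "bool \<times> bool stream \<Rightarrow> bool" where
  "returns \<omega> \<longleftrightarrow> (\<exists>j\<ge>1. X \<omega> j = 0)"

lemma X_eq_sum_take_increments: "j \<le> N \<Longrightarrow> X \<omega> j = sum_list (take j (increments \<omega> N))"
proof -
  assume j: "j \<le> N"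
  have t: "take j [1..<N+1] = [1..<1+j]" using j by (intro take_upt) simp
  have "take j (increments \<omega> N) = map (eps \<omega>) [1..<1+j]" unfolding increments_def take_map t ..
  moreover have "sum_list (map (eps \<omega>) [1..<1+j]) = sum (eps \<omega>) (set [1..<1+j])"
    by (rule sum_set_upt_conv_sum_list_nat[symmetric])
  moreover have "set [1..<1+j] = {1..j}" by auto
  ultimately show ?thesis unfolding X_def by simp
qed

lemma X_eq_sum_increments: "X \<omega> N = sum_list (increments \<omega> N)"
  using X_eq_sum_take_increments[of N N \<omega>] by simp

lemma L_eq_if_excursion_increments: assumes "excursion (increments \<omega> N)" shows "returns \<omega> \<and> L \<omega> = N"
proof -
  have N: "N \<ge> 1" using assms unfolding excursion_def by (cases N) (auto simp: increments_0)
  have XN: "X \<omega> N = 0" using assms X_eq_sum_increments[of \<omega> N] unfolding excursion_def by simp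
  have nz: "X \<omega> j \<noteq> 0" if "1 \<le> j" "j < N" for j
    using assms X_eq_sum_take_increments[of j N \<omega>] that unfolding excursion_def by auto
  define S where "S = {j. j \<ge> 1 \<and> X \<omega> j = 0}"
  have NS: "N \<in> S" using N XN unfolding S_def by simp
  have "L \<omega> = (LEAST j. j \<in> S)" unfolding L_def S_def by (simp add: Inf_nat_def)
  also have "\<dots> = N"
  proof (rule Least_equality)
    show "N \<in> S" by (rule NS)
    fix y assume y: "y \<in> S"
    show "N \<le> y"
    proof (rule ccontr)
      assume "\<not> N \<le> y"
      then have "y < N" by simp
      then show False using nz[of y] y unfolding S_def by auto
    qed
  qed
  finally show ?thesis using N XN unfolding returns_def by auto
qed

lemma excursion_increments_L: assumes "returns \<omega>" shows "excursion (increments \<omega> (L \<omega>))"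
proof -
  define S where "S = {j. j \<ge> 1 \<and> X \<omega> j = 0}"
  have ne: "\<exists>j. j \<in> S" using assms unfolding returns_def S_def by auto
  have LS: "L \<omega> = (LEAST j. j \<in> S)" unfolding L_def S_def by (simp add: Inf_nat_def)
  have LinS: "L \<omega> \<in> S" unfolding LS using ne by (rule LeastI_ex)
  have Lmin: "\<And>j. j \<in> S \<Longrightarrow> L \<omega> \<le> j" unfolding LS by (rule Least_le)
  have L1: "L \<omega> \<ge> 1" using LinS unfolding S_def by simp
  show ?thesis unfolding excursion_def
  proof (intro conjI allI impI)
    show "increments \<omega> (L \<omega>) \<noteq> []" using L1
      by (cases "L \<omega>") (auto simp: increments_def)
    show "sum_list (increments \<omega> (L \<omega>)) = 0"
      using LinS X_eq_sum_increments[of \<omega> "L \<omega>"] unfolding S_def by simp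
    fix j assume j: "0 < j \<and> j < length (increments \<omega> (L \<omega>))"
    then have "j < L \<omega>" by simp
    then have "j \<notin> S" using Lmin[of j] by auto
    then show "sum_list (take j (increments \<omega> (L \<omega>))) \<noteq> 0"
      using j X_eq_sum_take_increments[of j "L \<omega>" \<omega>] unfolding S_def by simp
  qed
qed

lemma steps_eq_increments: "steps \<omega> = increments \<omega> (L \<omega>)"
  unfolding steps_def increments_def by simp

lemma L_if_not_returns: "\<not> returns \<omega> \<Longrightarrow> L \<omega> = Inf ({} :: nat set)"
proof -
  assume "\<not> returns \<omega>"
  then have e: "{j. j \<ge> 1 \<and> X \<omega> j = 0} = {}" unfolding returns_def by auto
  show ?thesis unfolding L_def e ..
qed

lemma sets_not_returns: "{\<omega>. \<not> returns \<omega>} \<in> sets (PRW a)"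
proof -
  have eq: "\<not> returns \<omega> \<longleftrightarrow> (\<forall>m. sum_list (increments \<omega> (Suc m)) \<noteq> 0)" for \<omega>
  proof
    assume "\<not> returns \<omega>"
    then show "\<forall>m. sum_list (increments \<omega> (Suc m)) \<noteq> 0" unfolding returns_def
      using X_eq_sum_increments by (metis le_add1 plus_1_eq_Suc)
  next
    assume a: "\<forall>m. sum_list (increments \<omega> (Suc m)) \<noteq> 0"
    show "\<not> returns \<omega>" unfolding returns_def
    proof
      assume "\<exists>j\<ge>1. X \<omega> j = 0"
      then obtain j where j: "j \<ge> 1" "X \<omega> j = 0" by blast
      then obtain m where "j = Suc m" by (cases j) auto
      then show False using a j X_eq_sum_increments[of \<omega> j] by simp
    qed
  qed
  have "{\<omega>. \<not> returns \<omega>} = (\<Inter>m. {\<omega>. sum_list (increments \<omega> (Suc m)) \<noteq> 0})"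
    using eq by auto
  also have "\<dots> \<in> sets (PRW a)" using sets_increments[of "\<lambda>xs. sum_list xs \<noteq> 0"]
    by (intro sets.countable_INT') auto
  finally show ?thesis .
qed

lemma steps_vimage_eq: "{\<omega>. steps \<omega> = xs}
    = {\<omega>. excursion xs \<and> increments \<omega> (length xs) = xs}
      \<union> ({\<omega>. \<not> returns \<omega>} \<inter> {\<omega>. increments \<omega> (Inf ({} :: nat set)) = xs})"
proof (intro set_eqI iffI)
  fix \<omega> assume a: "\<omega> \<in> {\<omega>. steps \<omega> = xs}"
  show "\<omega> \<in> {\<omega>. excursion xs \<and> increments \<omega> (length xs) = xs}
      \<union> ({\<omega>. \<not> returns \<omega>} \<inter> {\<omega>. increments \<omega> (Inf ({} :: nat set)) = xs})"
  proof (cases "returns \<omega>")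
    case True
    then show ?thesis using excursion_increments_L[OF True] a steps_eq_increments[of \<omega>] by auto
  next
    case False
    then show ?thesis using L_if_not_returns[OF False] a steps_eq_increments[of \<omega>] by auto
  qed
next
  fix \<omega> assume a: "\<omega> \<in> {\<omega>. excursion xs \<and> increments \<omega> (length xs) = xs}
      \<union> ({\<omega>. \<not> returns \<omega>} \<inter> {\<omega>. increments \<omega> (Inf ({} :: nat set)) = xs})"
  show "\<omega> \<in> {\<omega>. steps \<omega> = xs}"
  proof (cases "excursion xs \<and> increments \<omega> (length xs) = xs")
    case True
    then have "excursion (increments \<omega> (length xs))" by simp
    then have "L \<omega> = length xs" using L_eq_if_excursion_increments by blast
    then show ?thesis using True steps_eq_increments[of \<omega>] by simp
  next
    case False
    then have "\<not> returns \<omega>" "increments \<omega> (Inf ({} :: nat set)) = xs" using a by auto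
    then show ?thesis using L_if_not_returns steps_eq_increments[of \<omega>] by simp
  qed
qed

lemma measurable_steps: "steps \<in> measurable (PRW a) (count_space UNIV)"
proof (rule measurable_count_space_eq2_countable[THEN iffD2], safe)
  fix xs :: "int list"
  have "steps -` {xs} \<inter> space (PRW a) = {\<omega>. steps \<omega> = xs}" by auto
  also have "\<dots> \<in> sets (PRW a)" unfolding steps_vimage_eq
    using sets_increments[of "\<lambda>ys. excursion xs \<and> ys = xs" "length xs"] sets_increments[of "\<lambda>ys. ys
        = xs" "Inf ({} :: nat set)"]
    by (intro sets.Un sets.Int sets_not_returns) auto
  finally show "steps -` {xs} \<inter> space (PRW a) \<in> sets (PRW a)" .
qed auto

section \<open>Recurrence\<close>

lemma path_weight_nonneg: "0 \<le> a \<Longrightarrow> a \<le> 1 \<Longrightarrow> 0 \<le> path_weight a xs"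
  by (induction a xs rule: path_weight.induct) auto

lemma path_weight_Cons: "xs \<noteq> []
    \<Longrightarrow> path_weight a (x # xs) = (if x = hd xs then a else 1 - a) * path_weight a xs"
  by (cases xs) auto

lemma path_weight_append: "xs \<noteq> [] \<Longrightarrow> ys \<noteq> []
    \<Longrightarrow> path_weight a (xs @ ys) = path_weight a xs * (if last xs = hd ys then a else 1 - a) * path_weight a ys"
proof (induction xs)
  case (Cons x xs')
  show ?case
  proof (cases "xs' = []")
    case True
    then show ?thesis using path_weight_Cons[OF Cons(3), of a x] by simp
  next
    case False
    have "path_weight a ((x # xs') @ ys) = (if x = hd xs' then a else 1 - a) * path_weight a (xs' @ ys)"
      using path_weight_Cons[of "xs' @ ys" a x] False by simp
    also have "\<dots> = (if x = hd xs' then a else 1 - a)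
        * (path_weight a xs' * (if last xs' = hd ys then a else 1 - a) * path_weight a ys)"
      using Cons False by simp
    also have "\<dots> = path_weight a (x # xs') * (if last (x # xs') = hd ys then a else 1 - a) * path_weight a ys"
      using path_weight_Cons[OF False, of a x] False by simp
    finally show ?thesis .
  qed
qed simp

lemma path_weight_rev: "path_weight a (rev xs) = path_weight a xs"
proof (induction xs)
  case (Cons x xs)
  show ?case
  proof (cases "xs = []")
    case True then show ?thesis by simp
  next
    case False
    have "path_weight a (rev (x # xs)) = path_weight a (rev xs @ [x])" by simp
    also have "\<dots> = path_weight a (rev xs) * (if last (rev xs) = x then a else 1 - a) * path_weight a [x]"
      using path_weight_append[of "rev xs" "[x]" a] False by simp
    also have "\<dots> = path_weight a xs * (if hd xs = x then a else 1 - a)" using Cons False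
      by (simp add: last_rev)
    also have "\<dots> = path_weight a (x # xs)" using path_weight_Cons[OF False] by (auto simp: mult.commute)
    finally show ?thesis .
  qed
qed simp

lemma path_weight_uminus: "path_weight a (map uminus xs) = path_weight a xs"
  by (induction a xs rule: path_weight.induct) auto

lemma sum_path_weight: assumes "0 \<le> a" "a \<le> 1" shows "(\<Sum>xs\<in>pm_words (Suc m). path_weight a xs) = 2"
proof -
  interpret P: prob_space "PRW a" by (rule prob_space_PRW)
  have "measure (PRW a) {\<omega>. (\<lambda>xs. True) (increments \<omega> (Suc m))}
      = (\<Sum>xs\<in>pm_words (Suc m). if True then 1/2 * path_weight a xs else 0)"
    by (rule measure_increments[OF assms])
  moreover have "{\<omega>. (\<lambda>xs. True) (increments \<omega> (Suc m))} = space (PRW a)" by simp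
  ultimately have "(\<Sum>xs\<in>pm_words (Suc m). 1/2 * path_weight a xs) = 1" using P.prob_space by simp
  then show ?thesis by (simp add: sum_divide_distrib[symmetric])
qed

definition pos_paths :: "nat \<Rightarrow> int list set" where
  "pos_paths m = {xs \<in> pm_words m. hd xs = 1 \<and> (\<forall>j. 0 < j \<and> j \<le> m \<longrightarrow> sum_list (take j xs) > 0)}"

definition pos_weight :: "real \<Rightarrow> nat \<Rightarrow> real" where
  "pos_weight a m = (\<Sum>xs\<in>pos_paths m. path_weight a xs)"

definition nonzero_sums :: "int list \<Rightarrow> bool" where
  "nonzero_sums xs \<longleftrightarrow> (\<forall>j. 0 < j \<and> j \<le> length xs \<longrightarrow> sum_list (take j xs) \<noteq> 0)"

lemma finite_pos_paths: "finite (pos_paths m)"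
  using finite_pm_words[of m] unfolding pos_paths_def by simp

lemma nonzero_sums_pos:
  assumes "set xs \<subseteq> {1,-1}" "hd xs = 1" "nonzero_sums xs"
  shows "\<forall>j. 0 < j \<and> j \<le> length xs \<longrightarrow> sum_list (take j xs) > 0"
  using partial_sums_pos_if_nonzero[OF assms(1,2) order_refl] assms(3)
  unfolding nonzero_sums_def by blast

lemma pos_paths_Suc_hd: "xs \<in> pos_paths (Suc m) \<Longrightarrow> xs \<noteq> [] \<and> hd xs = 1"
  unfolding pos_paths_def pm_words_def by auto

lemma pos_paths_disjoint_uminus: "pos_paths (Suc m) \<inter> map uminus ` pos_paths (Suc m) = {}"
proof -
  have "hd (map uminus ys) = -1" if "ys \<in> pos_paths (Suc m)" for ys
    using pos_paths_Suc_hd[OF that] by (simp add: hd_map)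
  then show ?thesis using pos_paths_Suc_hd by force
qed

lemma nonzero_sums_words_eq:
  "{xs \<in> pm_words (Suc m). nonzero_sums xs} = pos_paths (Suc m) \<union> map uminus ` pos_paths (Suc m)"
proof (intro set_eqI iffI)
  fix xs assume "xs \<in> {xs \<in> pm_words (Suc m). nonzero_sums xs}"
  then have xs: "set xs \<subseteq> {1,-1}" "length xs = Suc m" "nonzero_sums xs"
    unfolding pm_words_def by auto
  have ne: "xs \<noteq> []" using xs by auto
  have "hd xs \<in> {1,-1}" using xs ne by (meson hd_in_set subsetD)
  then show "xs \<in> pos_paths (Suc m) \<union> map uminus ` pos_paths (Suc m)"
  proof
    assume h: "hd xs = 1"
    then show ?thesis using nonzero_sums_pos[OF xs(1) h xs(3)] xs
      unfolding pos_paths_def pm_words_def by auto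
  next
    assume "hd xs \<in> {-1}"
    then have h: "hd (map uminus xs) = 1" using ne by (simp add: hd_map)
    have s: "set (map uminus xs) \<subseteq> {1,-1}" using xs by auto
    have n: "nonzero_sums (map uminus xs)"
      using xs(3) unfolding nonzero_sums_def by (simp add: take_map sum_list_map_uminus)
    have "map uminus xs \<in> pos_paths (Suc m)"
      using nonzero_sums_pos[OF s h n] s xs h unfolding pos_paths_def pm_words_def by auto
    moreover have "xs = map uminus (map uminus xs)" by simp
    ultimately show ?thesis by blast
  qed
next
  fix xs assume "xs \<in> pos_paths (Suc m) \<union> map uminus ` pos_paths (Suc m)"
  then obtain ys where ys: "ys \<in> pos_paths (Suc m)" "xs = ys \<or> xs = map uminus ys" by blast
  then have y: "set ys \<subseteq> {1,-1}" "length ys = Suc m"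
    "\<forall>j. 0 < j \<and> j \<le> Suc m \<longrightarrow> 0 < sum_list (take j ys)"
    unfolding pos_paths_def pm_words_def by auto
  then have "nonzero_sums ys" "nonzero_sums (map uminus ys)"
    unfolding nonzero_sums_def by (auto simp: take_map sum_list_map_uminus)
  moreover have "set (map uminus ys) \<subseteq> {1,-1}" using y(1) by auto
  ultimately show "xs \<in> {xs \<in> pm_words (Suc m). nonzero_sums xs}"
    using ys(2) y(1,2) unfolding pm_words_def by (elim disjE) simp_all
qed

lemma sum_nonzero_sums:
  "(\<Sum>xs\<in>pm_words (Suc m). if nonzero_sums xs then 1/2 * path_weight a xs else 0)
      = pos_weight a (Suc m)"
proof -
  define P where "P = pos_paths (Suc m)"
  have "(\<Sum>xs\<in>pm_words (Suc m). if nonzero_sums xs then 1/2 * path_weight a xs else 0)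
      = (\<Sum>xs\<in>P \<union> map uminus ` P. 1/2 * path_weight a xs)"
    unfolding P_def nonzero_sums_words_eq[symmetric]
    by (rule sum.inter_filter[symmetric, OF finite_pm_words])
  also have "\<dots> = (\<Sum>xs\<in>P. 1/2 * path_weight a xs) + (\<Sum>xs\<in>map uminus ` P. 1/2 * path_weight a xs)"
    using finite_pos_paths pos_paths_disjoint_uminus unfolding P_def by (intro sum.union_disjoint) auto
  also have "(\<Sum>xs\<in>map uminus ` P. 1/2 * path_weight a xs) = (\<Sum>xs\<in>P. 1/2 * path_weight a xs)"
    by (subst sum.reindex) (auto intro: inj_onI simp: path_weight_uminus)
  finally show ?thesis unfolding pos_weight_def P_def by (simp add: sum_divide_distrib[symmetric])
qed

lemma prob_not_returns_le: assumes "0 \<le> a" "a \<le> 1"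
  shows "measure (PRW a) {\<omega>. \<not> returns \<omega>} \<le> pos_weight a (Suc m)"
proof -
  interpret P: prob_space "PRW a" by (rule prob_space_PRW)
  have "{\<omega>. \<not> returns \<omega>} \<subseteq> {\<omega>. nonzero_sums (increments \<omega> (Suc m))}"
  proof
    fix \<omega> assume "\<omega> \<in> {\<omega>. \<not> returns \<omega>}"
    then have nz: "\<forall>j\<ge>1. X \<omega> j \<noteq> 0" unfolding returns_def by auto
    have "nonzero_sums (increments \<omega> (Suc m))" unfolding nonzero_sums_def
    proof (intro allI impI)
      fix j assume j: "0 < j \<and> j \<le> length (increments \<omega> (Suc m))"
      then have "X \<omega> j = sum_list (take j (increments \<omega> (Suc m)))"
        using X_eq_sum_take_increments[of j "Suc m" \<omega>] by simp
      moreover have "X \<omega> j \<noteq> 0" using nz j by simp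
      ultimately show "sum_list (take j (increments \<omega> (Suc m))) \<noteq> 0" by simp
    qed
    then show "\<omega> \<in> {\<omega>. nonzero_sums (increments \<omega> (Suc m))}" by simp
  qed
  then have "measure (PRW a) {\<omega>. \<not> returns \<omega>}
      \<le> measure (PRW a) {\<omega>. nonzero_sums (increments \<omega> (Suc m))}"
    using sets_increments[of nonzero_sums "Suc m" a] by (intro P.finite_measure_mono) auto
  also have "\<dots> = pos_weight a (Suc m)"
    using measure_increments[OF assms, of nonzero_sums m] sum_nonzero_sums[where a = a and m = m] by simp
  finally show ?thesis .
qed

definition glue :: "int list \<times> int list \<Rightarrow> int list" where
  "glue z = rev (map uminus (fst z)) @ snd z"

lemma pos_pathsD: "p \<in> pos_paths k
    \<Longrightarrow> set p \<subseteq> {1,-1} \<and> length p = k \<and> hd p = 1 \<and> (\<forall>j. 0 < j \<and> j \<le> k \<longrightarrow> sum_list (take j p) > 0)"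
  unfolding pos_paths_def pm_words_def by auto

lemma glue_min_before: assumes "p \<in> pos_paths k" "i < k"
  shows "sum_list (take i (glue (p, f))) > sum_list (take k (glue (p, f)))"
proof -
  have p: "length p = k" "\<forall>j. 0 < j \<and> j \<le> k \<longrightarrow> sum_list (take j p) > 0"
    using pos_pathsD[OF assms(1)] by auto
  define q where "q = rev (map uminus p)"
  have lq: "length q = k" unfolding q_def using p by simp
  have Jq: "glue (p, f) = q @ f" unfolding glue_def q_def by simp
  have t1: "take i (glue (p, f)) = take i q" unfolding Jq using lq assms(2) by simp
  have t2: "take k (glue (p, f)) = q" unfolding Jq using lq by simp
  have "take i q = rev (drop (k - i) (map uminus p))" unfolding q_def using p by (simp add: take_rev)
  then have s1: "sum_list (take i q) = - sum_list (drop (k - i) p)"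
    by (simp add: drop_map sum_list_map_uminus)
  have s2: "sum_list q = - sum_list p" unfolding q_def by (simp add: sum_list_map_uminus)
  have sp: "sum_list p = sum_list (take (k - i) p) + sum_list (drop (k - i) p)"
    by (metis append_take_drop_id sum_list_append)
  have "sum_list (take (k - i) p) > 0" using p assms(2) by simp
  then show ?thesis unfolding t1 t2 s1 s2 using sp by simp
qed

lemma glue_min_after: assumes "p \<in> pos_paths k" "f \<in> pos_paths m" "k < i" "i \<le> k + m"
  shows "sum_list (take i (glue (p, f))) > sum_list (take k (glue (p, f)))"
proof -
  have p: "length p = k" using pos_pathsD[OF assms(1)] by auto
  have f: "\<forall>j. 0 < j \<and> j \<le> m \<longrightarrow> sum_list (take j f) > 0"
    using pos_pathsD[OF assms(2)] by auto
  define q where "q = rev (map uminus p)"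
  have lq: "length q = k" unfolding q_def using p by simp
  have Jq: "glue (p, f) = q @ f" unfolding glue_def q_def by simp
  have t1: "take i (glue (p, f)) = q @ take (i - k) f" unfolding Jq using lq assms(3) by simp
  have t2: "take k (glue (p, f)) = q" unfolding Jq using lq by simp
  have "sum_list (take (i - k) f) > 0" using f assms(3,4) by simp
  then show ?thesis unfolding t1 t2 by simp
qed

lemma glue_in_pm_words: "p \<in> pos_paths k \<Longrightarrow> f \<in> pos_paths m \<Longrightarrow> glue (p, f) \<in> pm_words (k + m)"
  using pos_pathsD[of p k] pos_pathsD[of f m] unfolding glue_def pm_words_def by auto

lemma path_weight_glue: assumes "p \<in> pos_paths k" "f \<in> pos_paths m" "k \<ge> 1" "m \<ge> 1"
  shows "path_weight a (glue (p, f)) = path_weight a p * (1 - a) * path_weight a f"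
proof -
  have p: "length p = k" "hd p = 1" and f: "length f = m" "hd f = 1"
    using pos_pathsD[OF assms(1)] pos_pathsD[OF assms(2)] by auto
  have pne: "p \<noteq> []" using p assms(3) by auto
  have fne: "f \<noteq> []" using f assms(4) by auto
  have qne: "rev (map uminus p) \<noteq> []" using pne by simp
  have "last (rev (map uminus p)) = - hd p" using pne by (simp add: last_rev hd_map)
  then have lst: "last (rev (map uminus p)) \<noteq> hd f" using p f by simp
  have "path_weight a (glue (p, f))
      = path_weight a (rev (map uminus p)) * (if last (rev (map uminus p)) = hd f then a else 1 - a) * path_weight a f"
    unfolding glue_def using path_weight_append[OF qne fne] by simp
  also have "\<dots> = path_weight a p * (1 - a) * path_weight a f" using lst
    by (simp add: path_weight_rev path_weight_uminus)
  finally show ?thesis .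
qed

lemma inj_on_glue: "inj_on glue (pos_paths k \<times> pos_paths m)"
proof (rule inj_onI)
  fix z z' assume z: "z \<in> pos_paths k \<times> pos_paths m" and z': "z' \<in> pos_paths k \<times> pos_paths m" and e: "glue z = glue z'"
  have l: "length (rev (map uminus (fst z))) = length (rev (map uminus (fst z')))"
    using z z' pos_pathsD by auto
  have "rev (map uminus (fst z)) = rev (map uminus (fst z')) \<and> snd z = snd z'"
    using e unfolding glue_def using append_eq_append_conv[OF disjI1[OF l]] by blast
  then have "fst z = fst z'" "snd z = snd z'" by (auto dest: map_inj_on simp: inj_on_def)
  then show "z = z'" by (simp add: prod_eq_iff)
qed

definition glued :: "nat \<Rightarrow> nat \<Rightarrow> int list set" where
  "glued N k = glue ` (pos_paths k \<times> pos_paths (N - k))"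

lemma disjoint_glued: assumes "1 \<le> k" "k < k'" "k' < N" shows "glued N k \<inter> glued N k' = {}"
proof (rule ccontr)
  assume "glued N k \<inter> glued N k' \<noteq> {}"
  then obtain xs where x1: "xs \<in> glued N k" and x2: "xs \<in> glued N k'" by blast
  obtain p f where pf: "p \<in> pos_paths k" "f \<in> pos_paths (N - k)" "xs = glue (p, f)" using x1
    unfolding glued_def by auto
  obtain p' f' where pf': "p' \<in> pos_paths k'" "f' \<in> pos_paths (N - k')" "xs = glue (p', f')" using x2
    unfolding glued_def by auto
  have "sum_list (take k xs) > sum_list (take k' xs)" using glue_min_before[OF pf'(1) assms(2), of f'] pf'(3)
    by simp
  moreover have "sum_list (take k' xs) > sum_list (take k xs)"
    using glue_min_after[OF pf(1) pf(2) assms(2)] pf(3) assms by simp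
  ultimately show False by simp
qed

lemma sum_path_weight_glued: assumes "1 \<le> k"
  "k < N" shows "(\<Sum>xs\<in>glued N k. path_weight a xs) = (1 - a) * (pos_weight a k * pos_weight a (N - k))"
proof -
  have "(\<Sum>xs\<in>glued N k. path_weight a xs)
      = (\<Sum>z\<in>pos_paths k \<times> pos_paths (N - k). path_weight a (glue z))"
    unfolding glued_def by (rule sum.reindex[OF inj_on_glue, unfolded comp_def])
  also have "\<dots> = (\<Sum>z\<in>pos_paths k \<times> pos_paths (N - k). path_weight a (fst z) * (1 - a) * path_weight a (snd z))"
    using assms by (intro sum.cong refl) (auto intro!: path_weight_glue)
  also have "\<dots> = (\<Sum>p\<in>pos_paths k. \<Sum>f\<in>pos_paths (N - k). path_weight a p * (1 - a) * path_weight a f)"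
    by (simp add: sum.cartesian_product split_def)
  also have "\<dots> = (\<Sum>p\<in>pos_paths k. \<Sum>f\<in>pos_paths (N - k). (1 - a) * (path_weight a p * path_weight a f))"
    by (simp add: algebra_simps)
  also have "\<dots> = (1 - a) * (\<Sum>p\<in>pos_paths k. \<Sum>f\<in>pos_paths (N - k). path_weight a p * path_weight a f)"
    by (simp add: sum_distrib_left)
  also have "\<dots> = (1 - a) * (pos_weight a k * pos_weight a (N - k))"
    unfolding pos_weight_def sum_product ..
  finally show ?thesis .
qed

lemma pos_weight_convolution_le: assumes "0 \<le> a" "a \<le> 1"
  shows "(1 - a) * (\<Sum>k\<in>{1..<Suc M}. pos_weight a k * pos_weight a (Suc M - k)) \<le> 2"
proof -
  define N where "N = Suc M"
  have fin: "finite (glued N k)" for k unfolding glued_def using finite_pos_paths by auto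
  have "(1 - a) * (\<Sum>k\<in>{1..<N}. pos_weight a k * pos_weight a (N - k))
      = (\<Sum>k\<in>{1..<N}. \<Sum>xs\<in>glued N k. path_weight a xs)"
    by (simp add: sum_path_weight_glued sum_distrib_left)
  also have "\<dots> = (\<Sum>xs\<in>(\<Union>k\<in>{1..<N}. glued N k). path_weight a xs)"
  proof (rule sum.UNION_disjoint[symmetric])
    show "\<forall>i\<in>{1..<N}. \<forall>j\<in>{1..<N}. i \<noteq> j \<longrightarrow> glued N i \<inter> glued N j = {}"
    proof (intro ballI impI)
      fix i j assume i: "i \<in> {1..<N}" and j: "j \<in> {1..<N}" and ij: "i \<noteq> j"
      show "glued N i \<inter> glued N j = {}"
      proof (cases "i < j")
        case True then show ?thesis using disjoint_glued[of i j N] i j by auto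
      next
        case False then have "j < i" using ij by simp
        then show ?thesis using disjoint_glued[of j i N] i j by auto
      qed
    qed
  qed (auto intro: fin)
  also have "\<dots> \<le> (\<Sum>xs\<in>pm_words N. path_weight a xs)"
  proof (rule sum_mono2[OF finite_pm_words])
    show "(\<Union>k\<in>{1..<N}. glued N k) \<subseteq> pm_words N"
    proof
      fix xs assume "xs \<in> (\<Union>k\<in>{1..<N}. glued N k)"
      then obtain k p f where "k \<in> {1..<N}" "p \<in> pos_paths k" "f \<in> pos_paths (N - k)"
        "xs = glue (p, f)" unfolding glued_def
        by auto
      then show "xs \<in> pm_words N" using glue_in_pm_words[of p k f "N - k"] by simp
    qed
    show "\<And>b. b \<in> pm_words N - (\<Union>k\<in>{1..<N}. glued N k)
        \<Longrightarrow> 0 \<le> path_weight a b" using path_weight_nonneg[OF assms]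
      by blast
  qed
  also have "\<dots> = 2" unfolding N_def by (rule sum_path_weight[OF assms])
  finally show ?thesis unfolding N_def .
qed

lemma pos_weight_nonneg: "0 \<le> a \<Longrightarrow> a \<le> 1 \<Longrightarrow> 0 \<le> pos_weight a m"
  unfolding pos_weight_def by (intro sum_nonneg path_weight_nonneg)

lemma prob_not_returns: assumes "0 < a" "a < 1"
  shows "measure (PRW a) {\<omega>. \<not> returns \<omega>} = 0"
proof (rule ccontr)
  define p0 where "p0 = measure (PRW a) {\<omega>. \<not> returns \<omega>}"
  assume "measure (PRW a) {\<omega>. \<not> returns \<omega>} \<noteq> 0"
  then have pp: "p0 > 0" unfolding p0_def using measure_nonneg[of "PRW a"] by (simp add: order_less_le)
  have le: "p0 \<le> pos_weight a k" if k1: "k \<ge> 1" for k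
  proof -
    obtain m where "k = Suc m" using k1 by (cases k) auto
    then show ?thesis unfolding p0_def using prob_not_returns_le[of a m] assms by simp
  qed
  define M where "M = nat \<lceil>2 / ((1 - a) * p0 * p0)\<rceil> + 1"
  have "(\<Sum>k\<in>{1..<Suc M}. p0 * p0) \<le> (\<Sum>k\<in>{1..<Suc M}. pos_weight a k * pos_weight a (Suc M - k))"
    using pp le pos_weight_nonneg[of a] assms by (intro sum_mono mult_mono) auto
  then have "real M * (p0 * p0) \<le> (\<Sum>k\<in>{1..<Suc M}. pos_weight a k * pos_weight a (Suc M - k))"
    by simp
  then have "(1 - a) * (real M * (p0 * p0)) \<le> 2"
    using pos_weight_convolution_le[of a M] assms by (smt (verit) mult_left_mono)
  moreover have "real M > 2 / ((1 - a) * p0 * p0)" unfolding M_def by linarith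
  then have "real M * ((1 - a) * p0 * p0) > 2" using pp assms by (simp add: field_simps)
  ultimately show False by (simp add: algebra_simps)
qed


lemma AE_returns:
  assumes "0 < a" "a < 1"
  shows "AE \<omega> in PRW a. returns \<omega>"
proof (rule AE_I')
  interpret P: prob_space "PRW a" by (rule prob_space_PRW)
  show "{\<omega>. \<not> returns \<omega>} \<in> null_sets (PRW a)"
    using sets_not_returns prob_not_returns[OF assms] by (simp add: null_sets_def P.emeasure_eq_measure)
qed auto
section \<open>The law of the excursion\<close>

lemma L_eq_length_steps: "L \<omega> = length (steps \<omega>)"
  by (simp add: steps_eq_increments)

lemma sets_steps_event: "{\<omega> \<in> space (PRW a). G (steps \<omega>)} \<in> sets (PRW a)"
  using measurable_sets[OF measurable_steps, of "{xs. G xs}"] by (simp add: vimage_def)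

lemma steps_eq_increments_if_returns:
  "returns \<omega> \<Longrightarrow> length xs = N \<Longrightarrow> steps \<omega> = xs \<longleftrightarrow> excursion (increments \<omega> N) \<and> increments \<omega> N = xs"
  using excursion_increments_L[of \<omega>] L_eq_if_excursion_increments[of \<omega> N] steps_eq_increments[of \<omega>]
    by auto

lemma measure_steps_event:
  assumes a: "0 < a" "a < 1" and G: "\<And>xs. G xs \<Longrightarrow> length xs = Suc m"
  shows "measure (PRW a) {\<omega> \<in> space (PRW a). G (steps \<omega>)}
       = (\<Sum>xs\<in>pm_words (Suc m). if excursion xs \<and> G xs then 1/2 * path_weight a xs else 0)"
proof -
  have "AE \<omega> in PRW a. G (steps \<omega>) \<longleftrightarrow> excursion (increments \<omega> (Suc m)) \<and> G (increments \<omega> (Suc m))"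
    using AE_returns[OF a]
  proof eventually_elim
    case (elim \<omega>)
    then show ?case using steps_eq_increments_if_returns[OF elim] G by (metis length_increments)
  qed
  then have "measure (PRW a) {\<omega> \<in> space (PRW a). G (steps \<omega>)}
      = measure (PRW a) {\<omega>. excursion (increments \<omega> (Suc m)) \<and> G (increments \<omega> (Suc m))}"
    by (intro measure_eq_AE sets_steps_event sets_increments[of "\<lambda>xs. excursion xs \<and> G xs"]) auto
  also have "\<dots> = (\<Sum>xs\<in>pm_words (Suc m). if excursion xs \<and> G xs then 1/2 * path_weight a xs else 0)"
    using measure_increments[of a "\<lambda>xs. excursion xs \<and> G xs" m] a by simp
  finally show ?thesis .
qed

lemma path_weight_runs:
  "xs \<noteq> [] \<Longrightarrow> path_weight a xs = a ^ (length xs - num_runs xs) * (1 - a) ^ (num_runs xs - 1)"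
proof (induction a xs rule: path_weight.induct)
  case (1 a x y zs)
  have r1: "0 < num_runs (y # zs)" and r2: "num_runs (y # zs) \<le> length (y # zs)"
    using num_runs_pos[of "y # zs"] num_runs_le_length[of "y # zs"] by simp_all
  have IH: "path_weight a (y # zs)
      = a ^ (length (y # zs) - num_runs (y # zs)) * (1 - a) ^ (num_runs (y # zs) - 1)"
    using 1 by simp
  show ?case
  proof (cases "x = y")
    case True
    have "length (x # y # zs) - num_runs (x # y # zs) = Suc (length (y # zs) - num_runs (y # zs))"
      using True r2 num_runs_Cons_Cons[of x y zs] by simp
    then show ?thesis using True IH num_runs_Cons_Cons[of x y zs] by simp
  next
    case False
    have "length (x # y # zs) - num_runs (x # y # zs) = length (y # zs) - num_runs (y # zs)"
      and "num_runs (x # y # zs) - 1 = Suc (num_runs (y # zs) - 1)"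
      using False r1 r2 num_runs_Cons_Cons[of x y zs] by simp_all
    then show ?thesis using False IH by (simp only: power_Suc) (simp add: mult_ac)
  qed
qed (auto simp: num_runs_def)

lemma measure_steps_runs:
  assumes a: "0 < a" "a < 1" and N: "0 < N"
  shows "measure (PRW a) {\<omega> \<in> space (PRW a). L \<omega> = N \<and> R \<omega> = r \<and> U \<omega> = l}
       = card {xs \<in> excursions N. num_runs xs = r \<and> num_long_runs xs = l} * (1/2 * a ^ (N - r) * (1 - a) ^ (r - 1))"
proof -
  define S where "S = {xs \<in> excursions N. num_runs xs = r \<and> num_long_runs xs = l}"
  obtain m where m: "N = Suc m" using N by (cases N) auto
  have "measure (PRW a) {\<omega> \<in> space (PRW a). L \<omega> = N \<and> R \<omega> = r \<and> U \<omega> = l}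
      = (\<Sum>xs\<in>pm_words N. if xs \<in> S then 1/2 * path_weight a xs else 0)"
    unfolding L_eq_length_steps R_def U_def m
    by (subst measure_steps_event[OF a]) (auto intro!: sum.cong simp: S_def excursions_def pm_words_def m)
  also have "\<dots> = (\<Sum>xs\<in>S. 1/2 * path_weight a xs)"
    using finite_pm_words[of N] by (simp add: sum.inter_filter[symmetric] S_def excursions_def pm_words_def)
  also have "\<dots> = (\<Sum>xs\<in>S. 1/2 * a ^ (N - r) * (1 - a) ^ (r - 1))"
    using path_weight_runs by (intro sum.cong refl) (auto simp: S_def excursions_def excursion_def)
  finally show ?thesis by (simp add: S_def)
qed

lemma L_minus_R_eq_iff:
  assumes "0 < N" "L \<omega> = N"
  shows "L \<omega> - R \<omega> = r \<longleftrightarrow> R \<omega> = N - r"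
proof -
  have "steps \<omega> \<noteq> []" using assms L_eq_length_steps[of \<omega>] by auto
  then have "0 < R \<omega>" "R \<omega> \<le> N"
    using assms num_runs_pos num_runs_le_length L_eq_length_steps[of \<omega>] unfolding R_def by auto
  then show ?thesis using assms by auto
qed

lemma measure_runs_duality:
  assumes a: "0 < a" "a < 1" and N: "4 \<le> N"
  shows "(1 - a) * measure (PRW a) {\<omega> \<in> space (PRW a). L \<omega> = N \<and> R \<omega> = r \<and> U \<omega> = l}
       = a * measure (PRW (1 - a)) {\<omega> \<in> space (PRW (1 - a)). L \<omega> = N \<and> L \<omega> - R \<omega> = r \<and> U \<omega> = l}"
proof -
  define C where "C r' = card {xs \<in> excursions N. num_runs xs = r' \<and> num_long_runs xs = l}" for r'
  have C: "C r = C (N - r)" unfolding C_def using card_excursions_num_runs_dual[OF N] .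
  have "{\<omega> \<in> space (PRW (1 - a)). L \<omega> = N \<and> L \<omega> - R \<omega> = r \<and> U \<omega> = l}
      = {\<omega> \<in> space (PRW (1 - a)). L \<omega> = N \<and> R \<omega> = N - r \<and> U \<omega> = l}"
    using L_minus_R_eq_iff[of N] N by auto
  then have m2: "measure (PRW (1 - a)) {\<omega> \<in> space (PRW (1 - a)). L \<omega> = N \<and> L \<omega> - R \<omega> = r \<and> U \<omega> = l}
      = C (N - r) * (1/2 * (1 - a) ^ (N - (N - r)) * a ^ (N - r - 1))"
    using measure_steps_runs[of "1 - a" N "N - r" l] a N by (simp add: C_def)
  have m1: "measure (PRW a) {\<omega> \<in> space (PRW a). L \<omega> = N \<and> R \<omega> = r \<and> U \<omega> = l}
      = C r * (1/2 * a ^ (N - r) * (1 - a) ^ (r - 1))"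
    using measure_steps_runs[OF a] N by (simp add: C_def)
  show ?thesis
  proof (cases "0 < r \<and> r < N")
    case True
    then obtain i j where ij: "r = Suc i" "N - r = Suc j" by (metis Suc_diff_Suc gr0_conv_Suc)
    have "N - Suc j = Suc i" using ij True by simp
    then show ?thesis unfolding m1 m2 C using ij by (simp add: mult_ac)
  next
    case False
    have "{xs \<in> excursions N. num_runs xs = 0 \<and> num_long_runs xs = l} = {}"
      using num_runs_le_length_excursions[of _ N] by fastforce
    then have "C 0 = 0" unfolding C_def by (simp only: card.empty)
    then have "C r = 0 \<and> C (N - r) = 0" using False C by (cases "r = 0") auto
    then show ?thesis unfolding m1 m2 by simp
  qed
qed

section \<open>Characteristic functions for \<open>a = 1/2\<close>\<close>

lemma integrable_bounded_steps:
  fixes F :: "int list \<Rightarrow> 'b::{banach, second_countable_topology}"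
  assumes "\<And>xs. norm (F xs) \<le> B"
  shows "integrable (PRW a) (\<lambda>\<omega>. F (steps \<omega>))"
proof -
  interpret P: prob_space "PRW a" by (rule prob_space_PRW)
  show ?thesis
    using assms measurable_compose[OF measurable_steps, of F]
    by (intro P.integrable_const_bound[where B = B]) auto
qed

lemma summable_measure_excursion_increments:
  "summable (\<lambda>n. measure (PRW a) {\<omega>. excursion (increments \<omega> n)})"
proof -
  interpret P: prob_space "PRW a" by (rule prob_space_PRW)
  have "disjoint_family (\<lambda>n. {\<omega>. excursion (increments \<omega> n)})"
    unfolding disjoint_family_on_def using L_eq_if_excursion_increments by blast
  then show ?thesis
    using P.finite_measure_UNION[of "\<lambda>n. {\<omega>. excursion (increments \<omega> n)}"] sets_increments
    by (auto intro: sums_summable)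
qed

text \<open>The part of a functional of the excursion carried by the event \<open>L = n\<close>.\<close>

definition excursion_part :: "(int list \<Rightarrow> 'b::zero) \<Rightarrow> nat \<Rightarrow> bool \<times> bool stream \<Rightarrow> 'b" where
  "excursion_part F n \<omega> = (if excursion (increments \<omega> n) then F (increments \<omega> n) else 0)"

lemma excursion_part_eq_if: "excursion_part F n \<omega> = (if n = L \<omega> then excursion_part F (L \<omega>) \<omega> else 0)"
proof (cases "n = L \<omega>")
  case False
  then show ?thesis using L_eq_if_excursion_increments[of \<omega> n] unfolding excursion_part_def by auto
qed simp

lemma excursion_part_L: "returns \<omega> \<Longrightarrow> excursion_part F (L \<omega>) \<omega> = F (steps \<omega>)"
  using excursion_increments_L steps_eq_increments unfolding excursion_part_def by simp

lemma norm_excursion_part_le: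
  assumes "\<And>xs. norm (F xs) \<le> B"
  shows "norm (excursion_part F n \<omega>) \<le> B * indicator {\<omega>. excursion (increments \<omega> n)} \<omega>"
  using assms norm_ge_zero[of "F []"] order_trans
  unfolding excursion_part_def by (fastforce split: split_indicator)

lemma integrable_excursion_part:
  fixes F :: "int list \<Rightarrow> 'b::{banach, second_countable_topology}"
  assumes "\<And>xs. norm (F xs) \<le> B"
  shows "integrable (PRW a) (excursion_part F n)"
proof -
  interpret P: prob_space "PRW a" by (rule prob_space_PRW)
  have "(\<lambda>xs. if excursion xs then F xs else 0) \<in> borel_measurable (count_space UNIV)" by simp
  then have meas: "(\<lambda>\<omega>. (\<lambda>xs. if excursion xs then F xs else 0) (increments \<omega> n)) \<in> borel_measurable (PRW a)"
    by (rule measurable_compose[OF measurable_increments])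
  have "0 \<le> B" using norm_ge_zero assms[of "[]"] by (rule order_trans)
  then have "norm (excursion_part F n \<omega>) \<le> B" for \<omega>
    using assms unfolding excursion_part_def by simp
  with meas show ?thesis
    unfolding excursion_part_def by (intro P.integrable_const_bound[where B = B]) auto
qed

lemma summable_integral_norm_excursion_part:
  fixes F :: "int list \<Rightarrow> 'b::{banach, second_countable_topology}"
  assumes bnd: "\<And>xs. norm (F xs) \<le> B"
  shows "summable (\<lambda>n. \<integral>\<omega>. norm (excursion_part F n \<omega>) \<partial>PRW a)"
proof (rule summable_comparison_test)
  interpret P: prob_space "PRW a" by (rule prob_space_PRW)
  define A where "A n = {\<omega>. excursion (increments \<omega> n)}" for n
  have "(\<integral>\<omega>. norm (excursion_part F n \<omega>) \<partial>PRW a) \<le> B * measure (PRW a) (A n)" for n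
  proof -
    have sA: "A n \<in> sets (PRW a)" unfolding A_def by (rule sets_increments)
    have "(\<integral>\<omega>. norm (excursion_part F n \<omega>) \<partial>PRW a) \<le> (\<integral>\<omega>. B * indicator (A n) \<omega> \<partial>PRW a)"
    proof (rule integral_mono)
      show "integrable (PRW a) (\<lambda>\<omega>. norm (excursion_part F n \<omega>))"
        using integrable_excursion_part[OF bnd] by auto
      show "integrable (PRW a) (\<lambda>\<omega>. B * indicator (A n) \<omega> :: real)"
        using sA by (intro integrable_mult_right integrable_real_indicator)
          (auto simp: less_top[symmetric] P.emeasure_finite)
    qed (use norm_excursion_part_le[OF bnd] in \<open>simp add: A_def\<close>)
    also have "\<dots> = B * measure (PRW a) (A n)" using sA by simp
    finally show ?thesis .
  qed
  then show "\<exists>N. \<forall>n\<ge>N. norm (\<integral>\<omega>. norm (excursion_part F n \<omega>) \<partial>PRW a) \<le> B * measure (PRW a) (A n)"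
    by (auto intro!: exI[of _ 0] simp: integral_nonneg_AE)
  show "summable (\<lambda>n. B * measure (PRW a) (A n))"
    unfolding A_def by (rule summable_mult[OF summable_measure_excursion_increments])
qed

lemma integral_steps_suminf:
  fixes F :: "int list \<Rightarrow> 'b::{banach, second_countable_topology}"
  assumes a: "0 < a" "a < 1" and bnd: "\<And>xs. norm (F xs) \<le> B"
  shows "(\<integral>\<omega>. F (steps \<omega>) \<partial>PRW a) = (\<Sum>n. \<integral>\<omega>. excursion_part F n \<omega> \<partial>PRW a)"
proof -
  note int = integrable_excursion_part[OF bnd]
  note sumint = summable_integral_norm_excursion_part[OF bnd]
  have summ: "AE \<omega> in PRW a. summable (\<lambda>n. norm (excursion_part F n \<omega>))"
  proof (rule AE_I2)
    fix \<omega>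
    have "(\<lambda>n. norm (excursion_part F n \<omega>))
        = (\<lambda>n. if n = L \<omega> then norm (excursion_part F (L \<omega>) \<omega>) else 0)"
      using excursion_part_eq_if by (metis norm_zero)
    then show "summable (\<lambda>n. norm (excursion_part F n \<omega>))"
      using sums_summable[OF sums_single[of "L \<omega>"]] by simp
  qed
  have "AE \<omega> in PRW a. F (steps \<omega>) = (\<Sum>n. excursion_part F n \<omega>)"
    using AE_returns[OF a]
  proof eventually_elim
    case (elim \<omega>)
    have "(\<lambda>n. excursion_part F n \<omega>) = (\<lambda>n. if n = L \<omega> then F (steps \<omega>) else 0)"
      using excursion_part_eq_if excursion_part_L[OF elim] by metis
    then show ?case using sums_unique[OF sums_single[of "L \<omega>" "\<lambda>_. F (steps \<omega>)"]]
      by simp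
  qed
  then have "(\<integral>\<omega>. F (steps \<omega>) \<partial>PRW a) = (\<integral>\<omega>. (\<Sum>n. excursion_part F n \<omega>) \<partial>PRW a)"
    using integrable_suminf[OF int summ sumint] integrable_bounded_steps[OF bnd]
    by (intro integral_cong_AE) auto
  also have "\<dots> = (\<Sum>n. \<integral>\<omega>. excursion_part F n \<omega> \<partial>PRW a)"
    by (rule integral_suminf[OF int summ sumint])
  finally show ?thesis .
qed

lemma integral_excursion_part:
  fixes F :: "int list \<Rightarrow> 'b::{banach, second_countable_topology}"
  assumes "0 \<le> a" "a \<le> 1"
  shows "(\<integral>\<omega>. excursion_part F n \<omega> \<partial>PRW a) = (\<Sum>xs\<in>excursions n. (1/2 * path_weight a xs) *\<^sub>R F xs)"
proof (cases n)
  case 0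
  have "excursions 0 = {}" unfolding excursions_def excursion_def by auto
  then show ?thesis using 0 by (simp add: excursion_part_def increments_0 excursion_def)
next
  case (Suc m)
  have "(\<integral>\<omega>. excursion_part F n \<omega> \<partial>PRW a)
      = (\<Sum>xs\<in>pm_words n. (1/2 * path_weight a xs) *\<^sub>R (if excursion xs then F xs else 0))"
    unfolding Suc excursion_part_def by (rule integral_increments[OF assms])
  also have "\<dots> = (\<Sum>xs\<in>excursions n. (1/2 * path_weight a xs) *\<^sub>R F xs)"
    using finite_pm_words[of n]
    by (simp add: sum.inter_filter[symmetric] excursions_def pm_words_def if_distrib[of "scaleR _"]
        cong: if_cong)
  finally show ?thesis .
qed

definition char_runs :: "real \<Rightarrow> real \<Rightarrow> real \<Rightarrow> int list \<Rightarrow> complex" where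
  "char_runs r s t xs = exp (\<i> * of_real (r * real (num_runs xs)))
     * exp (\<i> * of_real (s * real (num_long_runs xs))) * exp (\<i> * of_real (t * real (length xs)))"

definition char_dual_runs :: "real \<Rightarrow> real \<Rightarrow> real \<Rightarrow> int list \<Rightarrow> complex" where
  "char_dual_runs r s t xs = exp (\<i> * of_real (r * real (length xs - num_runs xs)))
     * exp (\<i> * of_real (s * real (num_long_runs xs))) * exp (\<i> * of_real (t * real (length xs)))"

lemma norm_char_runs_sub_le: "norm (char_runs r s t xs - char_dual_runs r s t xs) \<le> 2"
  using norm_triangle_ineq4[of "char_runs r s t xs" "char_dual_runs r s t xs"]
  by (simp add: char_runs_def char_dual_runs_def norm_mult)

lemma sum_excursions_char_runs_dual:
  assumes "4 \<le> N"
  shows "(\<Sum>xs\<in>excursions N. char_runs r s t xs) = (\<Sum>xs\<in>excursions N. char_dual_runs r s t xs)"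
proof -
  have "char_dual_runs r s t xs = char_runs r s t (dual_word xs)" if xs: "xs \<in> excursions N" for xs
    using dual_word_in_excursions[OF xs assms] num_runs_dual_word[OF xs assms]
      num_long_runs_dual_word[OF xs assms] xs
    by (simp add: char_runs_def char_dual_runs_def excursions_def)
  then have "(\<Sum>xs\<in>excursions N. char_dual_runs r s t xs)
      = (\<Sum>xs\<in>excursions N. char_runs r s t (dual_word xs))"
    by simp
  also have "\<dots> = (\<Sum>xs\<in>excursions N. char_runs r s t xs)"
    by (rule sum.reindex_bij_betw[OF bij_betw_dual_word[OF assms]])
  finally show ?thesis by simp
qed

lemma excursions_2: "excursions 2 = {[1, -1], [-1, 1]}"
proof (intro set_eqI iffI)
  fix xs assume xs: "xs \<in> excursions 2"
  then have "length xs = 2" unfolding excursions_def by simp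
  then obtain x y where xy: "xs = [x, y]" by (cases xs; cases "tl xs") auto
  show "xs \<in> {[1, -1], [-1, 1]}" using xs unfolding xy excursions_def excursion_def by auto
qed (auto simp: excursions_def excursion_def less_Suc_eq)

lemma path_weight_half: "path_weight (1/2) xs = (1/2) ^ (length xs - 1)"
  by (induction "1/2 :: real" xs rule: path_weight.induct) auto

lemma sum_excursions_char_diff_half:
  "(\<Sum>xs\<in>excursions n. (1/2 * path_weight (1/2) xs) *\<^sub>R (char_runs r s t xs - char_dual_runs r s t xs))
     = (if n = 2 then 1/2 * exp (2 * \<i> * of_real t) * (exp (2 * \<i> * of_real r) - 1) else 0)"
proof -
  have w: "1/2 * path_weight (1/2) xs = (1/2) ^ n" if xs: "xs \<in> excursions n" for xs
  proof -
    have "length xs = n" "xs \<noteq> []" using xs unfolding excursions_def excursion_def by auto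
    then show ?thesis unfolding path_weight_half by (cases n) auto
  qed
  let ?d = "\<lambda>xs. char_runs r s t xs - char_dual_runs r s t xs"
  let ?S = "\<lambda>f. \<Sum>xs\<in>excursions n. f r s t xs"
  have "(\<Sum>xs\<in>excursions n. (1/2 * path_weight (1/2) xs) *\<^sub>R ?d xs)
      = (\<Sum>xs\<in>excursions n. (1/2) ^ n *\<^sub>R ?d xs)"
    using w by (intro sum.cong refl) (simp only:)
  also have "\<dots> = (1/2) ^ n *\<^sub>R (?S char_runs - ?S char_dual_runs)"
    by (simp only: sum_subtractf[symmetric] scaleR_sum_right)
  finally have weight: "(\<Sum>xs\<in>excursions n. (1/2 * path_weight (1/2) xs) *\<^sub>R ?d xs)
      = (1/2) ^ n *\<^sub>R (?S char_runs - ?S char_dual_runs)" .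
  have "n = 2 \<or> 4 \<le> n \<or> odd n \<or> n = 0" by presburger
  then consider "n = 2" | "4 \<le> n" | "odd n \<or> n = 0" by blast
  then show ?thesis
  proof cases
    case 1
    have "num_runs [1, -1 :: int] = 2" "num_runs [-1, 1 :: int] = 2"
      "num_long_runs [1, -1 :: int] = 0" "num_long_runs [-1, 1 :: int] = 0"
      unfolding num_runs_def num_long_runs_def by simp_all
    then show ?thesis
      unfolding weight 1 excursions_2
      by (simp add: char_runs_def char_dual_runs_def scaleR_conv_of_real algebra_simps)
  next
    case 2
    then show ?thesis unfolding weight by (simp add: sum_excursions_char_runs_dual)
  next
    case 3
    then have "excursions n = {}"
      using even_length_excursion unfolding excursions_def excursion_def by auto
    then show ?thesis using 3 by auto
  qed
qed

lemma char_runs_difference_half: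
  "(\<integral>\<omega>. char_runs r s t (steps \<omega>) \<partial>PRW (1/2)) - (\<integral>\<omega>. char_dual_runs r s t (steps \<omega>) \<partial>PRW (1/2))
     = 1/2 * exp (2 * \<i> * of_real t) * (exp (2 * \<i> * of_real r) - 1)"
proof -
  let ?c = "1/2 * exp (2 * \<i> * of_real t) * (exp (2 * \<i> * of_real r) - 1)"
  have "integrable (PRW (1/2)) (\<lambda>\<omega>. char_runs r s t (steps \<omega>))"
    and "integrable (PRW (1/2)) (\<lambda>\<omega>. char_dual_runs r s t (steps \<omega>))"
    by (intro integrable_bounded_steps[where B = 1]; simp add: char_runs_def char_dual_runs_def norm_mult)+
  then have "(\<integral>\<omega>. char_runs r s t (steps \<omega>) \<partial>PRW (1/2)) - (\<integral>\<omega>. char_dual_runs r s t (steps \<omega>) \<partial>PRW (1/2))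
      = (\<integral>\<omega>. char_runs r s t (steps \<omega>) - char_dual_runs r s t (steps \<omega>) \<partial>PRW (1/2))"
    by (rule Bochner_Integration.integral_diff[symmetric])
  also have "\<dots> = (\<Sum>n. \<integral>\<omega>. excursion_part (\<lambda>xs. char_runs r s t xs - char_dual_runs r s t xs) n \<omega>
      \<partial>PRW (1/2))"
    by (rule integral_steps_suminf[OF _ _ norm_char_runs_sub_le]) simp_all
  also have "\<dots> = (\<Sum>n. if n = 2 then ?c else 0)"
  proof -
    have "(\<integral>\<omega>. excursion_part (\<lambda>xs. char_runs r s t xs - char_dual_runs r s t xs) n \<omega> \<partial>PRW (1/2))
        = (if n = 2 then ?c else 0)" for n
      using integral_excursion_part[where a = "1/2" and n = n
          and F = "\<lambda>xs. char_runs r s t xs - char_dual_runs r s t xs"]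
        sum_excursions_char_diff_half[where n = n and r = r and s = s and t = t]
      by simp
    then show ?thesis by simp
  qed
  also have "\<dots> = ?c"
    using sums_unique[OF sums_single[of 2 "\<lambda>_. ?c"]] by simp
  finally show ?thesis .
qed

theorem corollary2:
  fixes a :: real
  assumes "0 < a" and "a < 1"
  shows "(\<forall>n k l :: nat. n \<ge> 2 \<longrightarrow>
            (1 - a) * measure (PRW a)
               {\<omega> \<in> space (PRW a). L \<omega> = 2*n \<and> R \<omega> = 2*k \<and> U \<omega> = l}
          = a * measure (PRW (1 - a))
               {\<omega> \<in> space (PRW (1 - a)). L \<omega> = 2*n \<and> L \<omega> - R \<omega> = 2*k \<and> U \<omega> = l})
       \<and> (\<forall>r s t :: real.
            integral\<^sup>L (PRW (1/2))
              (\<lambda>\<omega>. exp (\<i> * of_real (r * real (R \<omega>))) * exp (\<i> * of_real (s * real (U \<omega>)))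
                   * exp (\<i> * of_real (t * real (L \<omega>))))
          - integral\<^sup>L (PRW (1/2))
              (\<lambda>\<omega>. exp (\<i> * of_real (r * real (L \<omega> - R \<omega>))) * exp (\<i> * of_real (s * real (U \<omega>)))
                   * exp (\<i> * of_real (t * real (L \<omega>))))
          = (1/2) * exp (2 * \<i> * of_real t) * (exp (2 * \<i> * of_real r) - 1))"
  using measure_runs_duality[OF assms] char_runs_difference_half
  unfolding char_runs_def char_dual_runs_def R_def U_def L_eq_length_steps
  by simp

end
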